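(* Let $D$ be a rank two filtered $(\varphi,N,L/K,E)$-module with $N\neq0$, with basis $\underline\eta$ such that $[\varphi]_{\underline\eta}=\mathrm{diag}(p\delta\cdot\vec1,\delta\cdot\vec1)$ ($\delta\in E^\times$), $[N]_{\underline\eta}=\begin{pmatrix}\vec0&\vec0\\ \vec1&\vec0\end{pmatrix}$, and filtration $\mathcal F(\vec x,\vec y;\underline k)$ with $k_i\ge0$. Then the $G$-action is given by $[g]_{\underline\eta}=\mathrm{diag}(\chi(g)\cdot\vec1,\chi(g)\cdot\vec1)$ for a single character $\chi:G\to E^\times$, and $D$ is weakly admissible if and only if $$2ef\,v_p(\delta)+ef=\sum_{i=0}^{m-1}k_i\quad\text{and}\quad ef\,v_p(\delta)\ge\sum_{\{i:x_i=0\}}k_i.$$ If $D$ is weakly admissible, it is irreducible if and only if the inequality is strict; if equality holds, $D_2=E^f\eta_2$ is its only nonzero proper weakly admissible sub-object.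
   Context: Setting: $p$ prime, $K/\mathbb{Q}_p$ finite, $L/K$ finite Galois, $G=\mathrm{Gal}(L/K)$, $L_0$ maximal unramified subfield of $L$, $f=[L_0:\mathbb{Q}_p]$, $e=[L:L_0]$, $m=ef$, $E$ finite over $\mathbb{Q}_p$ containing all embeddings of $L$; $v_p(p)=1$. $L_0\otimes E\cong E^f$, $L\otimes E\cong E^m$, $E^f\to E^m$ is $\vec a\mapsto\vec a^{\otimes e}$ ($e$ concatenated copies); $\varphi(x_0,\dots,x_{f-1})=(x_1,\dots,x_{f-1},x_0)$; $c\cdot\vec 1=(c,\dots,c)$; $G$ acts on $E^f$ via $g|_{L_0}$. A rank two filtered $(\varphi,N,L/K,E)$-module: free $E^f$-module $D$ of rank 2 with $\varphi$-semilinear bijection $\varphi$, nilpotent $E^f$-linear $N$ with $N\varphi=p\varphi N$, a filtration on $D_L=L\otimes_{L_0}D$, and a semilinear $E$-linear $G$-action commuting with $\varphi,N$ and preserving the filtration; matrices via $(T\eta_1,T\eta_2)=(\eta_1,\eta_2)[T]$. Filtration $\mathcal F(\vec x,\vec y;\underline k)$: $\mathrm{Fil}^jD_L=D_L$ ($j\le0$), $\mathrm{Fil}^jD_L=E^mf_{\{i:k_i\ge j\}}(\vec x(1\otimes\eta_1)+\vec y(1\otimes\eta_2))$ ($j\ge1$), $(x_i,y_i)\ne(0,0)$, $f_J=\sum_{s\in J}e_s$. $t_H(M)=\sum_s\sum_j j\dim_E(e_s\mathrm{Fil}^jM/e_s\mathrm{Fil}^{j+1}M)$; for a $\varphi$-stable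 free $D'$ with $[\varphi|_{D'}]=A$, $t_N(D')=e\,v_p(\prod_j(\det A)_j)$; $D'_L$ has the induced filtration. $D$ is weakly admissible if $t_H(D_L)=t_N(D)$ and $t_H(D'_L)\le t_N(D')$ for every $E^f$-submodule $D'$ stable under $\varphi$ and $N$. A weakly admissible sub-object is a nonzero submodule stable under $\varphi$, $N$, $G$ with $t_H(D'_L)=t_N(D')$; irreducible means no proper such sub-object. *)

theory Defs
  imports "HOL-Algebra.Group" "HOL-Library.Function_Algebras" "HOL-Library.Product_Plus"
    "Jordan_Normal_Form.Determinant"
begin

(* An element of E^n is a function nat => E vanishing at indices >= n.
   E^f = L_0 (x) E, E^m = L (x) E, m = e*f.  An element of D is a pair (a,b) meaning
   a*eta_1 + b*eta_2 (a,b in E^f); an element of D_L is a pair (c,d) meaning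
   c*(1(x)eta_1) + d*(1(x)eta_2) with c,d in E^m. *)

definition wvecs :: "nat \<Rightarrow> (nat \<Rightarrow> 'a::zero) set" where
  "wvecs n = {x. \<forall>i\<ge>n. x i = 0}"

definition wcst :: "nat \<Rightarrow> 'a::zero \<Rightarrow> nat \<Rightarrow> 'a" where
  "wcst n c = (\<lambda>i. if i < n then c else 0)"

text \<open>Frobenius-power action on E^f: shift by s; s = 1 is phi (x_0..x_{f-1}) = (x_1,..,x_{f-1},x_0)\<close>
definition wshift :: "nat \<Rightarrow> nat \<Rightarrow> (nat \<Rightarrow> 'a::zero) \<Rightarrow> nat \<Rightarrow> 'a" where
  "wshift f s x = (\<lambda>i. if i < f then x ((i + s) mod f) else 0)"

text \<open>the map E^f -> E^m, a |-> a^{(x) e} (e concatenated copies), m = e f\<close>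
definition wtens :: "nat \<Rightarrow> nat \<Rightarrow> (nat \<Rightarrow> 'a::zero) \<Rightarrow> nat \<Rightarrow> 'a" where
  "wtens f m x = (\<lambda>i. if i < m then x (i mod f) else 0)"

definition wD :: "nat \<Rightarrow> ((nat \<Rightarrow> 'a::zero) \<times> (nat \<Rightarrow> 'a)) set" where
  "wD f = wvecs f \<times> wvecs f"

definition wsmult :: "(nat \<Rightarrow> 'a::times) \<Rightarrow> (nat \<Rightarrow> 'a) \<times> (nat \<Rightarrow> 'a) \<Rightarrow> (nat \<Rightarrow> 'a) \<times> (nat \<Rightarrow> 'a)" where
  "wsmult a u = (a * fst u, a * snd u)"

text \<open>phi with [phi]_eta = diag(p delta, delta), semilinear\<close>
definition wphi :: "nat \<Rightarrow> nat \<Rightarrow> 'a::comm_ring_1 \<Rightarrow> (nat \<Rightarrow> 'a) \<times> (nat \<Rightarrow> 'a) \<Rightarrow> (nat \<Rightarrow> 'a) \<times> (nat \<Rightarrow> 'a)" where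
  "wphi p f \<delta> u = (wcst f (of_nat p * \<delta>) * wshift f 1 (fst u), wcst f \<delta> * wshift f 1 (snd u))"

text \<open>N with [N]_eta = ((0,0),(1,0)), i.e. N eta_1 = eta_2, N eta_2 = 0\<close>
definition wN :: "(nat \<Rightarrow> 'a::zero) \<times> (nat \<Rightarrow> 'a) \<Rightarrow> (nat \<Rightarrow> 'a) \<times> (nat \<Rightarrow> 'a)" where
  "wN u = (0, fst u)"

definition wsubmod :: "nat \<Rightarrow> ((nat \<Rightarrow> 'a::comm_ring_1) \<times> (nat \<Rightarrow> 'a)) set \<Rightarrow> bool" where
  "wsubmod f S \<longleftrightarrow> S \<subseteq> wD f \<and> 0 \<in> S \<and> (\<forall>u\<in>S. \<forall>w\<in>S. u + w \<in> S)
     \<and> (\<forall>a\<in>wvecs f. \<forall>u\<in>S. wsmult a u \<in> S)"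

definition wbasis :: "nat \<Rightarrow> ((nat \<Rightarrow> 'a::comm_ring_1) \<times> (nat \<Rightarrow> 'a)) set \<Rightarrow> nat
    \<Rightarrow> (nat \<Rightarrow> (nat \<Rightarrow> 'a) \<times> (nat \<Rightarrow> 'a)) \<Rightarrow> bool" where
  "wbasis f S r bs \<longleftrightarrow> (\<forall>j<r. bs j \<in> S)
     \<and> S = {\<Sum>j<r. wsmult (c j) (bs j) | c. \<forall>j<r. c j \<in> wvecs f}
     \<and> (\<forall>c. (\<forall>j<r. c j \<in> wvecs f) \<and> (\<Sum>j<r. wsmult (c j) (bs j)) = 0 \<longrightarrow> (\<forall>j<r. c j = 0))"

text \<open>A is the matrix of phi|_S in the basis bs: (phi b_1,..,phi b_r) = (b_1,..,b_r) A\<close>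
definition wmatrix :: "nat \<Rightarrow> nat \<Rightarrow> 'a::comm_ring_1 \<Rightarrow> nat \<Rightarrow> (nat \<Rightarrow> (nat \<Rightarrow> 'a) \<times> (nat \<Rightarrow> 'a))
    \<Rightarrow> (nat \<Rightarrow> nat \<Rightarrow> nat \<Rightarrow> 'a) \<Rightarrow> bool" where
  "wmatrix p f \<delta> r bs A \<longleftrightarrow> (\<forall>i<r. \<forall>j<r. A i j \<in> wvecs f)
     \<and> (\<forall>j<r. wphi p f \<delta> (bs j) = (\<Sum>i<r. wsmult (A i j) (bs i)))"

definition wtN :: "('a::comm_ring_1 \<Rightarrow> rat) \<Rightarrow> nat \<Rightarrow> nat \<Rightarrow> nat \<Rightarrow> (nat \<Rightarrow> nat \<Rightarrow> nat \<Rightarrow> 'a) \<Rightarrow> rat" where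
  "wtN v e f r A = of_nat e * v (\<Prod>l<f. det (mat r r (\<lambda>(i,j). A i j l)))"

text \<open>D'_L = L (x)_{L_0} D' inside D_L: the E^m-span of the image of D'\<close>
definition wL :: "nat \<Rightarrow> nat \<Rightarrow> ((nat \<Rightarrow> 'a::comm_ring_1) \<times> (nat \<Rightarrow> 'a)) set \<Rightarrow> ((nat \<Rightarrow> 'a) \<times> (nat \<Rightarrow> 'a)) set" where
  "wL f m S = {\<Sum>j<n. wsmult (c j) (wtens f m (fst (w j)), wtens f m (snd (w j))) | (n::nat) c w.
       \<forall>j<n. c j \<in> wvecs m \<and> w j \<in> S}"

definition wFil :: "nat \<Rightarrow> (nat \<Rightarrow> int) \<Rightarrow> (nat \<Rightarrow> 'a::comm_ring_1) \<Rightarrow> (nat \<Rightarrow> 'a) \<Rightarrow> int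
    \<Rightarrow> ((nat \<Rightarrow> 'a) \<times> (nat \<Rightarrow> 'a)) set" where
  "wFil m k x y j = (if j \<le> 0 then wvecs m \<times> wvecs m
     else {wsmult (c * (\<lambda>i. if i < m \<and> k i \<ge> j then 1 else 0)) (x, y) | c. c \<in> wvecs m})"

definition wsc2 :: "'a::field \<Rightarrow> 'a \<times> 'a \<Rightarrow> 'a \<times> 'a" where
  "wsc2 c u = (c * fst u, c * snd u)"

text \<open>dim_E e_s M (e_s-component of D_L is E eta_1 + E eta_2 = E^2)\<close>
definition wdimc :: "nat \<Rightarrow> ((nat \<Rightarrow> 'a::field) \<times> (nat \<Rightarrow> 'a)) set \<Rightarrow> nat" where
  "wdimc s M = vector_space.dim wsc2 ((\<lambda>u. (fst u s, snd u s)) ` M)"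

text \<open>t_H(M) = sum_s sum_j j dim_E(e_s Fil^j M / e_s Fil^{j+1} M), with the induced filtration
  Fil^j M = M \<inter> Fil^j D_L; the inner sum is over the (finite) support of the summand.\<close>
definition wtH :: "nat \<Rightarrow> (nat \<Rightarrow> int) \<Rightarrow> (nat \<Rightarrow> 'a::field) \<Rightarrow> (nat \<Rightarrow> 'a)
    \<Rightarrow> ((nat \<Rightarrow> 'a) \<times> (nat \<Rightarrow> 'a)) set \<Rightarrow> int" where
  "wtH m k x y M = (\<Sum>s<m. let t = (\<lambda>j. j * (int (wdimc s (M \<inter> wFil m k x y j))
                                        - int (wdimc s (M \<inter> wFil m k x y (j + 1)))))
                          in (\<Sum>j\<in>{j. t j \<noteq> 0}. t j))"

definition wweakly_admissible :: "('a::field \<Rightarrow> rat) \<Rightarrow> nat \<Rightarrow> 'a \<Rightarrow> nat \<Rightarrow> nat \<Rightarrow> (nat \<Rightarrow> int)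
    \<Rightarrow> (nat \<Rightarrow> 'a) \<Rightarrow> (nat \<Rightarrow> 'a) \<Rightarrow> bool" where
  "wweakly_admissible v p \<delta> e f k x y \<longleftrightarrow>
     (\<forall>r bs A. wbasis f (wD f) r bs \<and> wmatrix p f \<delta> r bs A \<longrightarrow>
        of_int (wtH (e*f) k x y (wL f (e*f) (wD f))) = wtN v e f r A)
   \<and> (\<forall>S. wsubmod f S \<and> wphi p f \<delta> ` S \<subseteq> S \<and> wN ` S \<subseteq> S \<longrightarrow>
        (\<forall>r bs A. wbasis f S r bs \<and> wmatrix p f \<delta> r bs A \<longrightarrow>
           of_int (wtH (e*f) k x y (wL f (e*f) S)) \<le> wtN v e f r A))"

definition wwa_sub :: "('a::field \<Rightarrow> rat) \<Rightarrow> nat \<Rightarrow> 'a \<Rightarrow> nat \<Rightarrow> nat \<Rightarrow> (nat \<Rightarrow> int)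
    \<Rightarrow> (nat \<Rightarrow> 'a) \<Rightarrow> (nat \<Rightarrow> 'a) \<Rightarrow> 'g set
    \<Rightarrow> ('g \<Rightarrow> (nat \<Rightarrow> 'a) \<times> (nat \<Rightarrow> 'a) \<Rightarrow> (nat \<Rightarrow> 'a) \<times> (nat \<Rightarrow> 'a))
    \<Rightarrow> ((nat \<Rightarrow> 'a) \<times> (nat \<Rightarrow> 'a)) set \<Rightarrow> bool" where
  "wwa_sub v p \<delta> e f k x y Gc gact S \<longleftrightarrow>
     wsubmod f S \<and> S \<noteq> {0} \<and> wphi p f \<delta> ` S \<subseteq> S \<and> wN ` S \<subseteq> S
     \<and> (\<forall>g\<in>Gc. gact g ` S \<subseteq> S)
     \<and> (\<exists>r bs A. wbasis f S r bs \<and> wmatrix p f \<delta> r bs A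
          \<and> of_int (wtH (e*f) k x y (wL f (e*f) S)) = wtN v e f r A)"

definition wirreducible where
  "wirreducible v p \<delta> e f k x y Gc gact \<longleftrightarrow>
     \<not> (\<exists>S. wwa_sub v p \<delta> e f k x y Gc gact S \<and> S \<noteq> wD f)"

text \<open>extension of the G-action to D_L = L (x)_{L_0} D: g (c eta_1 + d eta_2) = g(c) g(eta_1) + g(d) g(eta_2),
  where g acts on E^m = L (x) E by permuting coordinates (embeddings) via pi g\<close>
definition wgactL where
  "wgactL f m (prm :: 'g \<Rightarrow> nat \<Rightarrow> nat) gact g u =
     (let pc = (\<lambda>c i. if i < m then c (prm g i) else 0);
          c1 = gact g (wcst f 1, 0); c2 = gact g (0, wcst f 1)
      in wsmult (pc (fst u)) (wtens f m (fst c1), wtens f m (snd c1))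
         + wsmult (pc (snd u)) (wtens f m (fst c2), wtens f m (snd c2)))"

end

theory Submission
  imports Defs
begin

(* Everything is computed in coordinates: D = E^f eta_1 + E^f eta_2 and D_L = E^m eta_1 + E^m eta_2
   (m = e f), and a vector of E^n is treated componentwise, so that the e_s-component of a
   submodule is an E-subspace of E^2 (the "fibre" at s).
   (1) Newton numbers.  The rank of a free submodule is the dimension of any of its fibres, and
       comparing phi on an arbitrary basis with phi on the standard basis shows that the product
       of the fibrewise determinants of [phi] is (p delta^2)^f for D and delta^f for D_2 = E^f eta_2.
   (2) Hodge numbers.  The fibres of the filtration give t_H(D_L) = sum_i k_i and
       t_H(D_2,L) = sum_{x_i = 0} k_i.
   (3) Classification.  phi moves the idempotent lines cyclically and N maps eta_1 to eta_2, so
       the only phi- and N-stable submodules are 0, D_2 and D.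
   (4) Galois action.  g(eta_1) is an eigenvector of phi for the eigenvalue p delta; as p^f <> 1
       this forces g(eta_1) = chi(g) eta_1, and N-equivariance then gives g(eta_2) = chi(g) eta_2.
   The main theorem follows: weak admissibility is tested on D and D_2 only, and D_2 (which is
   G-stable by (4)) is the only candidate for a proper weakly admissible sub-object. *)


lemma det_mat_0: "det (mat 0 0 g) = (1 :: 'a::comm_ring_1)"
  by (rule det_dim_zero) auto

lemma det_mat_1: "det (mat 1 1 g) = (g (0,0) :: 'a::comm_ring_1)"
  by (subst laplace_expansion_column[of _ 1 0])
     (auto simp: cofactor_def mat_delete_def det_dim_zero)

lemma det_mat_2: "det (mat 2 2 g) = (g (0,0) * g (1,1) - g (0,1) * g (1,0) :: 'a::comm_ring_1)"
  apply (subst laplace_expansion_column[of _ 2 0])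
    apply (auto simp: cofactor_def numeral_2_eq_2)
  apply (subst (1 2) laplace_expansion_column[of _ 1 0])
    apply (auto simp: mat_delete_def cofactor_def)
  done


section \<open>Fibres: the e_s-components as subspaces of E^2\<close>

interpretation W: vector_space "wsc2 :: 'a::field \<Rightarrow> 'a \<times> 'a \<Rightarrow> 'a \<times> 'a"
  by unfold_locales (auto simp: wsc2_def algebra_simps)

lemma W_span_basis: "W.span {(1::'a::field, 0), (0, 1)} = UNIV"
proof -
  have "(a, b) \<in> W.span {(1::'a, 0), (0, 1)}" for a b
  proof -
    have "wsc2 a (1, 0) + wsc2 b (0, 1) \<in> W.span {(1::'a, 0), (0, 1)}"
      by (intro W.span_add W.span_scale W.span_base) auto
    then show ?thesis by (simp add: wsc2_def)
  qed
  then show ?thesis by auto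
qed

lemma W_indep_basis: "W.independent {(1::'a::field, 0), (0, 1)}"
proof
  assume "W.dependent {(1::'a, 0), (0, 1)}"
  then obtain u where u: "\<exists>w\<in>{(1::'a, 0), (0, 1)}. u w \<noteq> 0"
    "(\<Sum>w\<in>{(1::'a, 0), (0, 1)}. wsc2 (u w) w) = 0"
    using W.dependent_finite[of "{(1::'a, 0), (0, 1)}"] by auto
  from u(2) have "(u (1, 0), u (0, 1)) = (0::'a, 0::'a)"
    by (simp add: wsc2_def zero_prod_def)
  with u(1) show False by auto
qed

interpretation W: finite_dimensional_vector_space "wsc2 :: 'a::field \<Rightarrow> 'a \<times> 'a \<Rightarrow> 'a \<times> 'a"
  "{(1, 0), (0, 1)}"
  by unfold_locales (auto simp: W_span_basis W_indep_basis)

lemma W_dim_line: "(w::'a::field \<times> 'a) \<noteq> 0 \<Longrightarrow> W.dim (range (\<lambda>t. wsc2 t w)) = 1"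
  by (metis W.dim_singleton W.dim_span W.span_singleton)

definition prj :: "nat \<Rightarrow> (nat \<Rightarrow> 'a) \<times> (nat \<Rightarrow> 'a) \<Rightarrow> 'a \<times> 'a" where
  "prj s u = (fst u s, snd u s)"

lemma fun_sum_apply: "(\<Sum>j\<in>A. g j) (i::nat) = (\<Sum>j\<in>A. g j i :: 'a::comm_monoid_add)"
  by (induct A rule: infinite_finite_induct) auto

lemma prj_add [simp]: "prj s (u + w) = prj s u + prj s w"
  by (simp add: prj_def)

lemma prj_zero [simp]: "prj s 0 = (0 :: 'a::zero \<times> 'a)"
  by (simp add: prj_def zero_prod_def)

lemma prj_sum: "prj s (\<Sum>j\<in>A. F j) = (\<Sum>j\<in>A. prj s (F j) :: 'a::comm_monoid_add \<times> 'a)"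
  by (simp add: prj_def fst_sum snd_sum fun_sum_apply sum_prod)

lemma prj_wsmult [simp]: "prj s (wsmult c u) = wsc2 (c s) (prj s (u :: (nat \<Rightarrow> 'a::field) \<times> _))"
  by (simp add: prj_def wsmult_def wsc2_def)

lemma pair_eq_prj: "u = w \<longleftrightarrow> (\<forall>s. prj s u = prj s w)"
  by (cases u; cases w) (auto simp: prj_def fun_eq_iff)

lemma wdimc_prj: "wdimc s M = W.dim (prj s ` M)"
proof -
  have "(\<lambda>u. (fst u s, snd u s)) = prj s" by (rule ext) (simp add: prj_def)
  then show ?thesis unfolding wdimc_def by metis
qed

lemma wsc2_neg1: "wsc2 (-1) u = - (u::'a::field \<times> 'a)"
  by (cases u) (simp add: wsc2_def)

lemma wvecs_single: "l < n \<Longrightarrow> (\<lambda>i. if i = l then t else 0) \<in> wvecs n"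
  by (auto simp: wvecs_def)

lemma wcst_vec [simp]: "wcst n c \<in> wvecs n"
  by (simp add: wcst_def wvecs_def)

lemma zero_wvecs [simp]: "0 \<in> wvecs n"
  by (simp add: wvecs_def)

lemma mult_wcst1: "b \<in> wvecs n \<Longrightarrow> b * wcst n (1::'a::comm_ring_1) = b"
  by (auto simp: wvecs_def wcst_def fun_eq_iff)

lemma wcst_mult: "wcst f a * wcst f b = wcst f (a * (b::'a::comm_ring_1))"
  by (auto simp: wcst_def fun_eq_iff)

lemma wshift_wcst: "wshift f s (wcst f c) = wcst f c"
  by (auto simp: wshift_def wcst_def fun_eq_iff)

lemma wshift_zero: "wshift f s (0::nat \<Rightarrow> 'a::zero) = 0"
  by (simp add: wshift_def fun_eq_iff)

abbreviation eta1 :: "nat \<Rightarrow> (nat \<Rightarrow> 'a::zero_neq_one) \<times> (nat \<Rightarrow> 'a)" where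
  "eta1 f \<equiv> (wcst f 1, 0)"

abbreviation eta2 :: "nat \<Rightarrow> (nat \<Rightarrow> 'a::zero_neq_one) \<times> (nat \<Rightarrow> 'a)" where
  "eta2 f \<equiv> (0, wcst f 1)"

definition wD2 :: "nat \<Rightarrow> ((nat \<Rightarrow> 'a::zero) \<times> (nat \<Rightarrow> 'a)) set" where
  "wD2 f = {(0, b) | b. b \<in> wvecs f}"

lemma prj_wD: "l < f \<Longrightarrow> prj l ` wD f = (UNIV :: ('a::field \<times> 'a) set)"
proof -
  assume l: "l < f"
  have "(a, b) \<in> prj l ` wD f" for a b :: 'a
  proof (rule image_eqI)
    show "((\<lambda>i. if i = l then a else 0), (\<lambda>i. if i = l then b else 0)) \<in> wD f"
      using l by (auto simp: wD_def wvecs_def)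
  qed (simp add: prj_def)
  then show ?thesis by auto
qed

lemma prj_wD2: "l < f \<Longrightarrow> prj l ` wD2 f = range (\<lambda>t. wsc2 t (0::'a::field, 1))"
proof
  show "prj l ` wD2 f \<subseteq> range (\<lambda>t. wsc2 t (0::'a, 1))"
    by (auto simp: wD2_def prj_def wsc2_def)
  assume l: "l < f"
  show "range (\<lambda>t. wsc2 t (0::'a, 1)) \<subseteq> prj l ` wD2 f"
  proof
    fix w assume "w \<in> range (\<lambda>t. wsc2 t (0::'a, 1))"
    then obtain t where w: "w = (0, t)" by (auto simp: wsc2_def)
    show "w \<in> prj l ` wD2 f"
    proof (rule image_eqI)
      show "(0, wcst f t) \<in> wD2 f" by (auto simp: wD2_def wcst_vec)
    qed (use w l in \<open>auto simp: prj_def wcst_def\<close>)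
  qed
qed


lemma wbasis_mem: "wbasis f S r bs \<Longrightarrow> j < r \<Longrightarrow> bs j \<in> S"
  unfolding wbasis_def by blast

lemma wbasis_eq:
  "wbasis f S r bs \<Longrightarrow> S = {\<Sum>j<r. wsmult (c j) (bs j) | c. \<forall>j<r. c j \<in> wvecs f}"
  unfolding wbasis_def by blast

lemma wbasis_ind:
  assumes "wbasis f S r bs" "\<forall>j<r. c j \<in> wvecs f" "(\<Sum>j<r. wsmult (c j) (bs j)) = 0" "j < r"
  shows "c j = 0"
  using assms unfolding wbasis_def by blast

lemma basis_fibre_indep:
  fixes bs :: "nat \<Rightarrow> (nat \<Rightarrow> 'a::field) \<times> (nat \<Rightarrow> 'a)"
  assumes B: "wbasis f S r bs" and l: "l < f"
    and sum0: "(\<Sum>j<r. wsc2 (\<gamma> j) (prj l (bs j))) = 0" and j: "j < r"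
  shows "\<gamma> j = 0"
proof -
  define c where "c = (\<lambda>j i. if i = l then \<gamma> j else (0::'a))"
  have cv: "\<forall>j<r. c j \<in> wvecs f" using l by (auto simp: c_def wvecs_def)
  have "(\<Sum>j<r. wsmult (c j) (bs j)) = 0"
    unfolding pair_eq_prj
  proof
    fix i
    show "prj i (\<Sum>j<r. wsmult (c j) (bs j)) = prj i 0"
      using sum0 by (cases "i = l") (simp_all add: prj_sum c_def)
  qed
  from wbasis_ind[OF B cv this j] show ?thesis by (metis c_def zero_fun_apply)
qed

lemma basis_fibre_span:
  fixes bs :: "nat \<Rightarrow> (nat \<Rightarrow> 'a::field) \<times> (nat \<Rightarrow> 'a)"
  assumes B: "wbasis f S r bs" and u: "u \<in> S"
  shows "\<exists>\<gamma>. prj l u = (\<Sum>j<r. wsc2 (\<gamma> j) (prj l (bs j)))"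
proof -
  from wbasis_eq[OF B] u obtain c where "u = (\<Sum>j<r. wsmult (c j) (bs j))" by blast
  then have "prj l u = (\<Sum>j<r. wsc2 (c j l) (prj l (bs j)))" by (simp add: prj_sum)
  then show ?thesis by (rule exI[of _ "\<lambda>j. c j l"])
qed

lemma basis_fibre_comb:
  fixes bs :: "nat \<Rightarrow> (nat \<Rightarrow> 'a::field) \<times> (nat \<Rightarrow> 'a)"
  assumes B: "wbasis f S r bs" and l: "l < f"
  shows "(\<Sum>j<r. wsc2 (\<gamma> j) (prj l (bs j))) \<in> prj l ` S"
proof (rule image_eqI)
  show "(\<Sum>j<r. wsmult (wcst f (\<gamma> j)) (bs j)) \<in> S"
    by (subst wbasis_eq[OF B]) (auto simp: wcst_vec)
qed (use l in \<open>simp add: prj_sum wcst_def\<close>)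

lemma wbasis_rank:
  fixes bs :: "nat \<Rightarrow> (nat \<Rightarrow> 'a::field) \<times> (nat \<Rightarrow> 'a)"
  assumes B: "wbasis f S r bs" and l: "l < f"
  shows "r = W.dim (prj l ` S)"
proof -
  define b where "b = (\<lambda>j. prj l (bs j))"
  have inj: "inj_on b {..<r}"
  proof (rule inj_onI, rule ccontr)
    fix i j assume i: "i \<in> {..<r}" and j: "j \<in> {..<r}" and eq: "b i = b j" and ne: "i \<noteq> j"
    define \<gamma> where "\<gamma> = (\<lambda>t. if t = i then 1 else if t = j then -1 else (0::'a))"
    have "\<And>t. wsc2 (\<gamma> t) (b t) = (if t = i then b i else 0) + (if t = j then - b j else 0)"
      using ne by (auto simp: \<gamma>_def wsc2_neg1)
    then have "(\<Sum>t<r. wsc2 (\<gamma> t) (b t)) = b i - b j"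
      using i j by (simp add: sum.distrib)
    with eq have "(\<Sum>t<r. wsc2 (\<gamma> t) (prj l (bs t))) = 0" by (simp add: b_def)
    from basis_fibre_indep[OF B l this, of i] i have "\<gamma> i = 0" by simp
    then show False by (simp add: \<gamma>_def)
  qed
  have ind: "W.independent (b ` {..<r})"
  proof
    assume "W.dependent (b ` {..<r})"
    then obtain u where u: "\<exists>w\<in>b ` {..<r}. u w \<noteq> 0" "(\<Sum>w\<in>b ` {..<r}. wsc2 (u w) w) = 0"
      using W.dependent_finite[of "b ` {..<r}"] by auto
    from u(2) have "(\<Sum>j<r. wsc2 (u (b j)) (b j)) = 0"
      by (simp add: sum.reindex[OF inj])
    then have "(\<Sum>j<r. wsc2 (u (b j)) (prj l (bs j))) = 0" unfolding b_def .
    from basis_fibre_indep[OF B l this] have "\<forall>j<r. u (b j) = 0" by blast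
    with u(1) show False by auto
  qed
  have "W.span (b ` {..<r}) = prj l ` S"
  proof
    show "W.span (b ` {..<r}) \<subseteq> prj l ` S"
    proof
      fix w assume "w \<in> W.span (b ` {..<r})"
      then obtain u where "w = (\<Sum>w\<in>b ` {..<r}. wsc2 (u w) w)"
        using W.span_finite[of "b ` {..<r}"] by auto
      then have "w = (\<Sum>j<r. wsc2 (u (b j)) (b j))"
        by (simp add: sum.reindex[OF inj])
      then have "w = (\<Sum>j<r. wsc2 (u (b j)) (prj l (bs j)))" unfolding b_def .
      then show "w \<in> prj l ` S" using basis_fibre_comb[OF B l] by simp
    qed
    show "prj l ` S \<subseteq> W.span (b ` {..<r})"
    proof
      fix w assume "w \<in> prj l ` S"
      then obtain u where u: "u \<in> S" "w = prj l u" by auto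
      from basis_fibre_span[OF B u(1)] obtain \<gamma> where "prj l u = (\<Sum>j<r. wsc2 (\<gamma> j) (b j))"
        unfolding b_def by blast
      moreover have "(\<Sum>j<r. wsc2 (\<gamma> j) (b j)) \<in> W.span (b ` {..<r})"
        by (intro W.span_sum W.span_scale W.span_base) auto
      ultimately show "w \<in> W.span (b ` {..<r})" using u by simp
    qed
  qed
  then have "W.dim (prj l ` S) = card (b ` {..<r})"
    using W.dim_span_eq_card_independent[OF ind] by simp
  also have "\<dots> = r" using card_image[OF inj] by simp
  finally show ?thesis by simp
qed


section \<open>Newton numbers of D, D_2 and 0\<close>

lemma wmatrix_rel: "wmatrix p f \<delta> r bs A \<Longrightarrow> j < r \<Longrightarrow>
    wphi p f \<delta> (bs j) = (\<Sum>i<r. wsmult (A i j) (bs i))"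
  unfolding wmatrix_def by blast

lemma prj_wphi: "l < f \<Longrightarrow>
    prj l (wphi p f \<delta> u) = (of_nat p * \<delta> * fst u (Suc l mod f), \<delta> * snd u (Suc l mod f))"
  by (simp add: prj_def wphi_def wcst_def wshift_def)

lemma prod_rotate:
  assumes "0 < (f::nat)"
  shows "(\<Prod>l<f. g (Suc l mod f)) = (\<Prod>l<f. g l :: 'a::comm_monoid_mult)"
proof (rule prod.reindex_bij_witness[where j="\<lambda>a. Suc a mod f" and i="\<lambda>b. (b + f - 1) mod f"])
  fix a assume a: "a \<in> {..<f}"
  show "(Suc a mod f + f - 1) mod f = a"
  proof (cases "Suc a < f")
    case True then show ?thesis using a by simp
  next
    case False then have "Suc a = f" using a by simp
    then show ?thesis by simp
  qed
  show "Suc a mod f \<in> {..<f}" using assms by simp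
next
  fix b assume b: "b \<in> {..<f}"
  show "Suc ((b + f - 1) mod f) mod f = b"
  proof (cases b)
    case 0 then show ?thesis using assms by (cases f) auto
  next
    case (Suc c)
    then have "(b + f - 1) mod f = c" using b by (simp add: mod_add_right_eq[symmetric])
    then show ?thesis using b Suc by simp
  qed
  show "(b + f - 1) mod f \<in> {..<f}" using assms by simp
qed simp

text \<open>If a nowhere-vanishing g satisfies c g(l+1) = h(l) g(l) cyclically, then prod h = c^f:
  this is how the twisted (semilinear) change of basis disappears from prod_l det A_l.\<close>
lemma cyclic_cocycle_product:
  fixes g h :: "nat \<Rightarrow> 'a::field"
  assumes f: "0 < f" and nz: "\<forall>l<f. g l \<noteq> 0" and eq: "\<forall>l<f. c * g (Suc l mod f) = h l * g l"
  shows "(\<Prod>l<f. h l) = c ^ f"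
proof -
  have "(\<Prod>l<f. c * g (Suc l mod f)) = (\<Prod>l<f. h l * g l)" using eq by (intro prod.cong) auto
  then have "c ^ f * (\<Prod>l<f. g l) = (\<Prod>l<f. h l) * (\<Prod>l<f. g l)"
    by (simp add: prod.distrib prod_rotate[OF f])
  moreover have "(\<Prod>l<f. g l) \<noteq> 0" using nz by simp
  ultimately show ?thesis by simp
qed

lemma newton_product_D2:
  fixes bs :: "nat \<Rightarrow> (nat \<Rightarrow> 'a::field) \<times> (nat \<Rightarrow> 'a)"
  assumes f: "0 < f" and B: "wbasis f (wD2 f) r bs" and M: "wmatrix p f \<delta> r bs A"
  shows "r = 1 \<and> (\<Prod>l<f. A 0 0 l) = \<delta> ^ f"
proof -
  have r: "r = 1"
    using wbasis_rank[OF B f] W_dim_line[of "(0::'a, 1::'a)"]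
    unfolding prj_wD2[OF f] by (simp add: zero_prod_def)
  have "bs 0 \<in> wD2 f" using wbasis_mem[OF B] r by simp
  then have fst0: "fst (bs 0) = 0" by (auto simp: wD2_def)
  define \<beta> where "\<beta> = snd (bs 0)"
  have nz: "\<forall>l<f. \<beta> l \<noteq> 0"
  proof (intro allI impI)
    fix l assume l: "l < f"
    have "(0::'a, 1::'a) \<in> prj l ` wD2 f" unfolding prj_wD2[OF l]
      using rangeI[of "\<lambda>t. wsc2 t (0::'a, 1::'a)" 1] by simp
    then obtain u where u: "(0::'a, 1::'a) = prj l u" "u \<in> wD2 f" by (rule imageE)
    from basis_fibre_span[OF B u(2), of l] obtain \<gamma>
      where "prj l u = (\<Sum>j<r. wsc2 (\<gamma> j) (prj l (bs j)))" by blast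
    with u r have "\<gamma> 0 * \<beta> l = 1" by (simp add: wsc2_def prj_def \<beta>_def)
    then show "\<beta> l \<noteq> 0" by auto
  qed
  have eq: "\<forall>l<f. \<delta> * \<beta> (Suc l mod f) = A 0 0 l * \<beta> l"
  proof (intro allI impI)
    fix l assume l: "l < f"
    have "prj l (wphi p f \<delta> (bs 0)) = prj l (wsmult (A 0 0) (bs 0))"
      using wmatrix_rel[OF M, of 0] r by simp
    then have "(of_nat p * \<delta> * fst (bs 0) (Suc l mod f), \<delta> * \<beta> (Suc l mod f))
        = wsc2 (A 0 0 l) (prj l (bs 0))"
      using l by (simp add: prj_wphi \<beta>_def)
    then show "\<delta> * \<beta> (Suc l mod f) = A 0 0 l * \<beta> l"
      by (simp add: \<beta>_def prj_def wsc2_def)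
  qed
  show ?thesis using r cyclic_cocycle_product[OF f nz eq] by simp
qed

definition fibre_det :: "(nat \<Rightarrow> (nat \<Rightarrow> 'a::comm_ring_1) \<times> (nat \<Rightarrow> 'a)) \<Rightarrow> nat \<Rightarrow> 'a" where
  "fibre_det bs l = fst (bs 0) l * snd (bs 1) l - fst (bs 1) l * snd (bs 0) l"

lemma fibre_det_nonzero:
  fixes bs :: "nat \<Rightarrow> (nat \<Rightarrow> 'a::field) \<times> (nat \<Rightarrow> 'a)"
  assumes B: "wbasis f (wD f) 2 bs" and l: "l < f"
  shows "fibre_det bs l \<noteq> 0"
proof -
  have ex: "\<exists>\<gamma>::nat \<Rightarrow> 'a. w = wsc2 (\<gamma> 0) (prj l (bs 0)) + wsc2 (\<gamma> 1) (prj l (bs 1))" for w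
  proof -
    have "w \<in> prj l ` wD f" unfolding prj_wD[OF l] by simp
    then obtain u where u: "w = prj l u" "u \<in> wD f" by (rule imageE)
    from basis_fibre_span[OF B u(2), of l] u(1) show ?thesis
      by (simp add: numeral_2_eq_2)
  qed
  obtain c :: "nat \<Rightarrow> 'a" where c: "(1, 0) = wsc2 (c 0) (prj l (bs 0)) + wsc2 (c 1) (prj l (bs 1))"
    using ex[of "(1, 0)"] by blast
  obtain d :: "nat \<Rightarrow> 'a" where d: "(0, 1) = wsc2 (d 0) (prj l (bs 0)) + wsc2 (d 1) (prj l (bs 1))"
    using ex[of "(0, 1)"] by blast
  define a0 where "a0 = fst (bs 0) l"
  define a1 where "a1 = fst (bs 1) l"
  define s0 where "s0 = snd (bs 0) l"
  define s1 where "s1 = snd (bs 1) l"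
  have e1: "c 0 * a0 + c 1 * a1 = 1" and e2: "c 0 * s0 + c 1 * s1 = 0"
    using c by (simp_all add: wsc2_def prj_def a0_def a1_def s0_def s1_def)
  have e3: "d 0 * a0 + d 1 * a1 = 0" and e4: "d 0 * s0 + d 1 * s1 = 1"
    using d by (simp_all add: wsc2_def prj_def a0_def a1_def s0_def s1_def)
  have "(a0 * s1 - a1 * s0) * (c 0 * d 1 - c 1 * d 0)
      = (c 0 * a0 + c 1 * a1) * (d 0 * s0 + d 1 * s1) - (d 0 * a0 + d 1 * a1) * (c 0 * s0 + c 1 * s1)"
    by (simp add: algebra_simps)
  also have "\<dots> = 1" using e1 e2 e3 e4 by simp
  finally show ?thesis unfolding fibre_det_def a0_def a1_def s0_def s1_def by auto
qed

lemma fibre_det_phi: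
  fixes bs :: "nat \<Rightarrow> (nat \<Rightarrow> 'a::field) \<times> (nat \<Rightarrow> 'a)"
  assumes M: "wmatrix p f \<delta> 2 bs A" and l: "l < f"
  shows "(of_nat p * \<delta> * \<delta>) * fibre_det bs (Suc l mod f)
       = (A 0 0 l * A 1 1 l - A 0 1 l * A 1 0 l) * fibre_det bs l"
proof -
  have R: "(of_nat p * \<delta> * fst (bs j) (Suc l mod f), \<delta> * snd (bs j) (Suc l mod f))
      = wsc2 (A 0 j l) (prj l (bs 0)) + wsc2 (A 1 j l) (prj l (bs 1))" if "j < 2" for j
    using arg_cong[OF wmatrix_rel[OF M that], of "prj l"] prj_wphi[OF l, of p \<delta> "bs j"]
    by (simp add: numeral_2_eq_2 prj_sum)
  define a0 where "a0 = fst (bs 0) l"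
  define a1 where "a1 = fst (bs 1) l"
  define s0 where "s0 = snd (bs 0) l"
  define s1 where "s1 = snd (bs 1) l"
  define P0 where "P0 = fst (bs 0) (Suc l mod f)"
  define P1 where "P1 = fst (bs 1) (Suc l mod f)"
  define Q0 where "Q0 = snd (bs 0) (Suc l mod f)"
  define Q1 where "Q1 = snd (bs 1) (Suc l mod f)"
  define q where "q = (of_nat p * \<delta> :: 'a)"
  have R0: "q * P0 = A 0 0 l * a0 + A 1 0 l * a1" "\<delta> * Q0 = A 0 0 l * s0 + A 1 0 l * s1"
    using R[of 0] by (simp_all add: wsc2_def prj_def a0_def a1_def s0_def s1_def P0_def Q0_def q_def)
  have R1: "q * P1 = A 0 1 l * a0 + A 1 1 l * a1" "\<delta> * Q1 = A 0 1 l * s0 + A 1 1 l * s1"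
    using R[of 1] by (simp_all add: wsc2_def prj_def a0_def a1_def s0_def s1_def P1_def Q1_def q_def)
  have "(q * \<delta>) * (P0 * Q1 - P1 * Q0) = (q * P0) * (\<delta> * Q1) - (q * P1) * (\<delta> * Q0)"
    by (simp add: algebra_simps)
  also have "\<dots> = (A 0 0 l * a0 + A 1 0 l * a1) * (A 0 1 l * s0 + A 1 1 l * s1)
                - (A 0 1 l * a0 + A 1 1 l * a1) * (A 0 0 l * s0 + A 1 0 l * s1)"
    using R0 R1 by simp
  also have "\<dots> = (A 0 0 l * A 1 1 l - A 0 1 l * A 1 0 l) * (a0 * s1 - a1 * s0)"
    by (simp add: algebra_simps)
  finally show ?thesis
    unfolding fibre_det_def a0_def a1_def s0_def s1_def P0_def P1_def Q0_def Q1_def q_def .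
qed

lemma newton_product_D:
  fixes bs :: "nat \<Rightarrow> (nat \<Rightarrow> 'a::field) \<times> (nat \<Rightarrow> 'a)"
  assumes f: "0 < f" and B: "wbasis f (wD f) r bs" and M: "wmatrix p f \<delta> r bs A"
  shows "r = 2 \<and> (\<Prod>l<f. A 0 0 l * A 1 1 l - A 0 1 l * A 1 0 l) = (of_nat p * \<delta> * \<delta>) ^ f"
proof -
  have r: "r = 2" using wbasis_rank[OF B f] unfolding prj_wD[OF f] by simp
  show ?thesis
    using r cyclic_cocycle_product[OF f, of "fibre_det bs"]
      fibre_det_nonzero[of f bs] fibre_det_phi[of p f \<delta> bs A] B M by simp
qed

lemma v_one:
  assumes vm: "\<And>a b. a \<noteq> 0 \<Longrightarrow> b \<noteq> 0 \<Longrightarrow> v (a * b) = v a + v b"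
  shows "v (1::'a::field) = (0::rat)"
  using vm[of 1 1] by simp

lemma v_power:
  assumes vm: "\<And>a b. a \<noteq> 0 \<Longrightarrow> b \<noteq> 0 \<Longrightarrow> v (a * b) = v a + v b" and a: "(a::'a::field) \<noteq> 0"
  shows "v (a ^ n) = of_nat n * (v a :: rat)"
proof (induction n)
  case 0 then show ?case using v_one[of v, OF vm] by simp
next
  case (Suc n)
  have "v (a ^ Suc n) = v a + v (a ^ n)" using vm a by simp
  then show ?case using Suc by (simp add: algebra_simps)
qed

lemma newton_D:
  fixes bs :: "nat \<Rightarrow> (nat \<Rightarrow> 'a::field) \<times> (nat \<Rightarrow> 'a)" and v :: "'a \<Rightarrow> rat"
  assumes vm: "\<And>a b. a \<noteq> 0 \<Longrightarrow> b \<noteq> 0 \<Longrightarrow> v (a * b) = v a + v b"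
    and vp: "v (of_nat p) = 1" and p0: "(of_nat p :: 'a) \<noteq> 0" and d: "\<delta> \<noteq> 0"
    and f: "0 < f" and B: "wbasis f (wD f) r bs" and M: "wmatrix p f \<delta> r bs A"
  shows "wtN v e f r A = 2 * of_nat (e*f) * v \<delta> + of_nat (e*f)"
proof -
  from newton_product_D[OF f B M] have r: "r = 2"
    and P: "(\<Prod>l<f. A 0 0 l * A 1 1 l - A 0 1 l * A 1 0 l) = (of_nat p * \<delta> * \<delta>) ^ f" by auto
  have "v (of_nat p * \<delta> * \<delta>) = 1 + 2 * v \<delta>"
    using vm[of "of_nat p * \<delta>" \<delta>] vm[OF p0 d] p0 d vp by simp
  then have "v ((of_nat p * \<delta> * \<delta>) ^ f) = of_nat f * (1 + 2 * v \<delta>)"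
    using v_power[of v, OF vm] p0 d by simp
  then show ?thesis using P by (simp add: wtN_def r det_mat_2 algebra_simps)
qed

lemma newton_D2:
  fixes bs :: "nat \<Rightarrow> (nat \<Rightarrow> 'a::field) \<times> (nat \<Rightarrow> 'a)" and v :: "'a \<Rightarrow> rat"
  assumes vm: "\<And>a b. a \<noteq> 0 \<Longrightarrow> b \<noteq> 0 \<Longrightarrow> v (a * b) = v a + v b" and d: "\<delta> \<noteq> 0"
    and f: "0 < f" and B: "wbasis f (wD2 f) r bs" and M: "wmatrix p f \<delta> r bs A"
  shows "wtN v e f r A = of_nat (e*f) * v \<delta>"
proof -
  from newton_product_D2[OF f B M] have r: "r = 1" and P: "(\<Prod>l<f. A 0 0 l) = \<delta> ^ f" by auto
  have "(\<Prod>l<f. det (mat r r (\<lambda>(i,j). A i j l))) = \<delta> ^ f"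
    unfolding r det_mat_1 using P by simp
  then show ?thesis using v_power[of v, OF vm d] by (simp add: wtN_def)
qed

lemma newton_zero:
  fixes bs :: "nat \<Rightarrow> (nat \<Rightarrow> 'a::field) \<times> (nat \<Rightarrow> 'a)" and v :: "'a \<Rightarrow> rat"
  assumes vm: "\<And>a b. a \<noteq> 0 \<Longrightarrow> b \<noteq> 0 \<Longrightarrow> v (a * b) = v a + v b"
    and f: "0 < f" and B: "wbasis f {0} r bs"
  shows "wtN v e f r A = 0"
proof -
  have r: "r = 0" using wbasis_rank[OF B f] by simp
  show ?thesis using v_one[of v, OF vm] by (simp add: wtN_def r det_mat_0)
qed


section \<open>Hodge numbers of D_L, D_2,L and 0\<close>

text \<open>t_H is a sum over fibres; when the jumps of the fibre dimensions d s j occur only at a s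
  (apart from j = 0, which carries weight 0), each fibre contributes a single term.\<close>
lemma single_support_sum:
  assumes "\<forall>j. j \<noteq> a \<longrightarrow> t j = (0::int)"
  shows "(\<Sum>j\<in>{j. t j \<noteq> 0}. t j) = t a"
proof (cases "t a = 0")
  case True
  then have "{j. t j \<noteq> 0} = {}" using assms by auto
  then show ?thesis using True by simp
next
  case False
  then have "{j. t j \<noteq> 0} = {a}" using assms by auto
  then show ?thesis by simp
qed

lemma wtH_single_jump:
  assumes d: "\<And>s j. s < m \<Longrightarrow> int (wdimc s (M \<inter> wFil m k x y j)) = d s j"
    and z: "\<And>s j. s < m \<Longrightarrow> j \<noteq> a s \<Longrightarrow> j * (d s j - d s (j+1)) = 0"
  shows "wtH m k x y M = (\<Sum>s<m. a s * (d s (a s) - d s (a s + 1)))"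
  unfolding wtH_def Let_def
proof (rule sum.cong[OF refl])
  fix s assume s: "s \<in> {..<m}"
  have "(\<Sum>j\<in>{j. j * (d s j - d s (j+1)) \<noteq> 0}. j * (d s j - d s (j+1)))
      = a s * (d s (a s) - d s (a s + 1))"
    by (rule single_support_sum) (use z s in auto)
  then show "(\<Sum>j\<in>{j. j * (int (wdimc s (M \<inter> wFil m k x y j))
                             - int (wdimc s (M \<inter> wFil m k x y (j + 1)))) \<noteq> 0}.
          j * (int (wdimc s (M \<inter> wFil m k x y j)) - int (wdimc s (M \<inter> wFil m k x y (j + 1)))))
      = a s * (d s (a s) - d s (a s + 1))"
    using s d by simp
qed

definition ind :: "nat \<Rightarrow> (nat \<Rightarrow> int) \<Rightarrow> int \<Rightarrow> nat \<Rightarrow> 'a::comm_ring_1" where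
  "ind m k j = (\<lambda>i. if i < m \<and> k i \<ge> j then 1 else 0)"

lemma ind_at: "s < m \<Longrightarrow> ind m k j s = (if j \<le> k s then 1 else 0)"
  by (simp add: ind_def)

lemma Fil_pos: "0 < j \<Longrightarrow> wFil m k x y j = {wsmult (c * ind m k j) (x, y) | c. c \<in> wvecs m}"
  by (simp add: wFil_def ind_def)

lemma Fil_nonpos: "j \<le> 0 \<Longrightarrow> wFil m k x y j = wvecs m \<times> wvecs m"
  by (simp add: wFil_def)

lemma Fil_sub: "wFil m k (x::nat \<Rightarrow> 'a::field) y j \<subseteq> wvecs m \<times> wvecs m"
  by (cases "j \<le> 0") (auto simp: Fil_nonpos Fil_pos wsmult_def wvecs_def)

lemma prj_Fil_pos:
  assumes s: "s < m" and j: "0 < j"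
  shows "prj s ` wFil m k x y j = range (\<lambda>t. wsc2 (t * ind m k j s) (x s, y s :: 'a::field))"
proof
  show "prj s ` wFil m k x y j \<subseteq> range (\<lambda>t. wsc2 (t * ind m k j s) (x s, y s))"
    using j by (auto simp: Fil_pos prj_def wsmult_def wsc2_def)
  show "range (\<lambda>t. wsc2 (t * ind m k j s) (x s, y s)) \<subseteq> prj s ` wFil m k x y j"
  proof
    fix w assume "w \<in> range (\<lambda>t. wsc2 (t * ind m k j s) (x s, y s))"
    then obtain t where w: "w = wsc2 (t * ind m k j s) (x s, y s)" by blast
    show "w \<in> prj s ` wFil m k x y j"
    proof (rule image_eqI)
      show "wsmult ((\<lambda>i. if i = s then t else 0) * ind m k j) (x, y) \<in> wFil m k x y j"
        using j s by (auto simp: Fil_pos intro!: wvecs_single)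
    qed (use w in \<open>simp add: prj_def wsmult_def wsc2_def\<close>)
  qed
qed

lemma dim_Fil_D:
  assumes s: "s < m" and xy: "(x s, y s) \<noteq> (0::'a::field, 0)"
  shows "int (wdimc s ((wvecs m \<times> wvecs m) \<inter> wFil m k x y j))
       = (if j \<le> 0 then 2 else if j \<le> k s then 1 else 0)"
proof -
  have "(wvecs m \<times> wvecs m) \<inter> wFil m k x y j = wFil m k x y j" using Fil_sub by blast
  then have E: "wdimc s ((wvecs m \<times> wvecs m) \<inter> wFil m k x y j) = W.dim (prj s ` wFil m k x y j)"
    by (simp add: wdimc_prj)
  show ?thesis
  proof (cases "j \<le> 0")
    case True
    have "prj s ` wFil m k x y j = UNIV"
      unfolding Fil_nonpos[OF True] using prj_wD[OF s] by (simp add: wD_def)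
    then show ?thesis unfolding E using True by simp
  next
    case False
    then have j: "0 < j" by simp
    show ?thesis
    proof (cases "j \<le> k s")
      case True
      then show ?thesis unfolding E prj_Fil_pos[OF s j] ind_at[OF s]
        using W_dim_line[of "(x s, y s)"] xy False by (simp add: zero_prod_def)
    next
      case F2: False
      have "range (\<lambda>t. wsc2 (t * 0) (x s, y s)) = {0::'a \<times> 'a}" by auto
      then show ?thesis unfolding E prj_Fil_pos[OF s j] ind_at[OF s] using False F2 by simp
    qed
  qed
qed

lemma prj_Fil_D2:
  assumes s: "s < m" and j: "0 < j"
  shows "prj s ` (({0} \<times> wvecs m) \<inter> wFil m k x y j)
       = (if j \<le> k s \<and> x s = 0 then range (\<lambda>t. wsc2 t (0, y s)) else {0::'a::field\<times>'a})"
proof -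
  let ?M = "({0} \<times> wvecs m) \<inter> wFil m k x y j"
  have mem: "u \<in> ?M \<longleftrightarrow>
      (\<exists>c. c \<in> wvecs m \<and> u = wsmult (c * ind m k j) (x, y) \<and> c * ind m k j * x = 0)" for u
    unfolding Fil_pos[OF j] by (auto simp: wsmult_def wvecs_def)
  show ?thesis
  proof (cases "j \<le> k s \<and> x s = 0")
    case True
    have "prj s ` ?M = range (\<lambda>t. wsc2 t (0, y s))"
    proof
      show "prj s ` ?M \<subseteq> range (\<lambda>t. wsc2 t (0, y s))"
      proof
        fix w assume "w \<in> prj s ` ?M"
        then obtain u where u: "w = prj s u" "u \<in> ?M" by (rule imageE)
        then obtain c where c: "u = wsmult (c * ind m k j) (x, y)" using mem by blast
        have "w = wsc2 (c s) (0, y s)"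
          using u(1) c True s by (simp add: prj_def wsmult_def wsc2_def ind_at)
        then show "w \<in> range (\<lambda>t. wsc2 t (0, y s))" by blast
      qed
    next
      show "range (\<lambda>t. wsc2 t (0, y s)) \<subseteq> prj s ` ?M"
      proof
        fix w assume "w \<in> range (\<lambda>t. wsc2 t (0, y s))"
        then obtain t where w: "w = wsc2 t (0, y s)" by blast
        define c where "c = (\<lambda>i. if i = s then t else (0::'a))"
        have cv: "c \<in> wvecs m" using s by (simp add: c_def wvecs_single)
        have "c * ind m k j * x = 0" using True by (auto simp: c_def fun_eq_iff)
        then have "wsmult (c * ind m k j) (x, y) \<in> ?M" using mem cv by blast
        moreover have "w = prj s (wsmult (c * ind m k j) (x, y))"
          using w True s by (simp add: prj_def wsmult_def wsc2_def c_def ind_at)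
        ultimately show "w \<in> prj s ` ?M" by (rule image_eqI[rotated])
      qed
    qed
    then show ?thesis using True by simp
  next
    case False
    have "prj s ` ?M = {0}"
    proof
      show "prj s ` ?M \<subseteq> {0}"
      proof
        fix w assume "w \<in> prj s ` ?M"
        then obtain u where u: "w = prj s u" "u \<in> ?M" by (rule imageE)
        then obtain c where c: "u = wsmult (c * ind m k j) (x, y)" "c * ind m k j * x = 0"
          using mem by blast
        from c(2) have cx: "c s * ind m k j s * x s = 0" by (metis times_fun_apply zero_fun_apply)
        have "c s * ind m k j s = 0"
        proof (cases "j \<le> k s")
          case True then have "x s \<noteq> 0" using False by simp
          then show ?thesis using cx by simp
        next
          case False then show ?thesis using s by (simp add: ind_at)
        qed
        then show "w \<in> {0}" using u(1) c(1) by (simp add: prj_def wsmult_def zero_prod_def)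
      qed
    next
      have "(0::(nat\<Rightarrow>'a)\<times>(nat\<Rightarrow>'a)) \<in> ?M"
        unfolding mem by (rule exI[of _ 0]) (auto simp: wsmult_def zero_prod_def wvecs_def)
      then have "prj s 0 \<in> prj s ` ?M" by (rule imageI)
      then show "{0} \<subseteq> prj s ` ?M" by simp
    qed
    then show ?thesis unfolding if_not_P[OF False] .
  qed
qed

lemma dim_Fil_D2:
  assumes s: "s < m" and xy: "(x s, y s) \<noteq> (0::'a::field, 0)"
  shows "int (wdimc s (({0} \<times> wvecs m) \<inter> wFil m k x y j))
       = (if j \<le> 0 then 1 else if j \<le> k s \<and> x s = 0 then 1 else 0)"
proof (cases "j \<le> 0")
  case True
  have "({0} \<times> wvecs m) \<inter> wFil m k x y j = wD2 m"
    unfolding Fil_nonpos[OF True] by (auto simp: wvecs_def wD2_def)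
  then show ?thesis
    using True W_dim_line[of "(0::'a, 1)"] by (simp add: wdimc_prj prj_wD2[OF s] zero_prod_def)
next
  case False
  have "y s \<noteq> 0" if "x s = 0" using xy that by auto
  then show ?thesis
    using False W_dim_line[of "(0, y s)"]
    by (simp add: wdimc_prj prj_Fil_D2[OF s] zero_prod_def)
qed

lemma wL_intro:
  "\<forall>j<(n::nat). c j \<in> wvecs m \<and> w j \<in> S \<Longrightarrow>
   u = (\<Sum>j<n. wsmult (c j) (wtens f m (fst (w j)), wtens f m (snd (w j)))) \<Longrightarrow> u \<in> wL f m S"
  unfolding wL_def by blast

lemma wtens_cst: "0 < f \<Longrightarrow> wtens f m (wcst f (1::'a::zero_neq_one)) = wcst m 1"
  by (auto simp: wtens_def wcst_def fun_eq_iff)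

lemma wtens_0: "wtens f m 0 = 0"
  by (auto simp: wtens_def fun_eq_iff)

lemma wL_shape:
  assumes "u \<in> wL f m S"
  shows "u \<in> wvecs m \<times> (wvecs m :: (nat \<Rightarrow> 'a::field) set)"
    and "(\<forall>w\<in>S. fst w = 0) \<Longrightarrow> fst u = 0"
proof -
  obtain n :: nat and c w where cw: "\<forall>j<n. c j \<in> wvecs m \<and> w j \<in> S"
    and u: "u = (\<Sum>j<n. wsmult (c j) (wtens f m (fst (w j)), wtens f m (snd (w j))))"
    using assms unfolding wL_def by blast
  have "\<forall>j<n. c j i = 0" if "m \<le> i" for i using cw that by (auto simp: wvecs_def)
  then have "prj i u = 0" if "m \<le> i" for i using that unfolding u by (simp add: prj_sum)
  then show "u \<in> wvecs m \<times> wvecs m"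
    by (cases u) (auto simp: prj_def wvecs_def zero_prod_def)
  assume "\<forall>w\<in>S. fst w = 0"
  then have "\<forall>j<n. fst (w j) = 0" using cw by auto
  then show "fst u = 0" unfolding u by (simp add: fst_sum wsmult_def wtens_0)
qed

lemma wL_D: "0 < f \<Longrightarrow> wL f m (wD f) = wvecs m \<times> (wvecs m :: (nat \<Rightarrow> 'a::field) set)"
proof
  show "wL f m (wD f) \<subseteq> wvecs m \<times> (wvecs m :: (nat \<Rightarrow> 'a) set)" using wL_shape(1) by blast
  assume f: "0 < f"
  show "wvecs m \<times> wvecs m \<subseteq> wL f m (wD f :: ((nat \<Rightarrow> 'a) \<times> (nat \<Rightarrow> 'a)) set)"
  proof
    fix u :: "(nat \<Rightarrow> 'a) \<times> (nat \<Rightarrow> 'a)" assume u: "u \<in> wvecs m \<times> wvecs m"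
    show "u \<in> wL f m (wD f)"
    proof (rule wL_intro[of 2 "\<lambda>j. if j = 0 then fst u else snd u" m
                            "\<lambda>j. if j = 0 then eta1 f else eta2 f"])
      show "\<forall>j<2. (if j = 0 then fst u else snd u) \<in> wvecs m
                  \<and> (if j = 0 then eta1 f else eta2 f) \<in> wD f"
        using u by (auto simp: wD_def wcst_def wvecs_def)
    qed (use u f in \<open>cases u, simp add: numeral_2_eq_2 wtens_cst wtens_0 wsmult_def mult_wcst1\<close>)
  qed
qed

lemma wL_D2: "0 < f \<Longrightarrow> wL f m (wD2 f) = {0} \<times> (wvecs m :: (nat \<Rightarrow> 'a::field) set)"
proof
  show "wL f m (wD2 f) \<subseteq> {0} \<times> (wvecs m :: (nat \<Rightarrow> 'a) set)"
  proof
    fix u :: "(nat \<Rightarrow> 'a) \<times> (nat \<Rightarrow> 'a)" assume u: "u \<in> wL f m (wD2 f)"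
    have "\<forall>w\<in>wD2 f. fst w = (0::nat \<Rightarrow> 'a)" by (auto simp: wD2_def)
    with wL_shape[OF u] show "u \<in> {0} \<times> wvecs m" by (cases u) auto
  qed
  assume f: "0 < f"
  show "{0} \<times> wvecs m \<subseteq> wL f m (wD2 f :: ((nat \<Rightarrow> 'a) \<times> (nat \<Rightarrow> 'a)) set)"
  proof
    fix u :: "(nat \<Rightarrow> 'a) \<times> (nat \<Rightarrow> 'a)" assume u: "u \<in> {0} \<times> wvecs m"
    show "u \<in> wL f m (wD2 f)"
    proof (rule wL_intro[of 1 "\<lambda>j. snd u" m "\<lambda>j. eta2 f"])
      show "\<forall>j<1. snd u \<in> wvecs m \<and> eta2 f \<in> wD2 f" using u by (auto simp: wD2_def wcst_vec)
    qed (use u f in \<open>auto simp: wtens_cst wtens_0 wsmult_def mult_wcst1\<close>)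
  qed
qed

lemma wL_zero: "wL f m {0} = {0 :: (nat \<Rightarrow> 'a::field) \<times> (nat \<Rightarrow> 'a)}"
proof
  show "wL f m {0} \<subseteq> {0 :: (nat \<Rightarrow> 'a) \<times> (nat \<Rightarrow> 'a)}"
  proof
    fix u :: "(nat \<Rightarrow> 'a) \<times> (nat \<Rightarrow> 'a)" assume "u \<in> wL f m {0}"
    then obtain n :: nat and c w where cw: "\<forall>j<n. c j \<in> wvecs m \<and> w j \<in> {0}"
      and u: "u = (\<Sum>j<n. wsmult (c j) (wtens f m (fst (w j)), wtens f m (snd (w j))))"
      unfolding wL_def by blast
    have "\<forall>j<n. w j = 0" using cw by auto
    then have "u = (\<Sum>j<n. 0)"
      unfolding u by (intro sum.cong) (auto simp: wtens_0 wsmult_def zero_prod_def)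
    then show "u \<in> {0}" by simp
  qed
  show "{0} \<subseteq> wL f m {0 :: (nat \<Rightarrow> 'a) \<times> (nat \<Rightarrow> 'a)}"
    using wL_intro[of 0 _ m _ "{0}" 0 f] by simp
qed

lemma hodge_D:
  assumes f: "0 < f" and xy: "\<And>s. s < m \<Longrightarrow> (x s, y s) \<noteq> (0::'a::field, 0)"
    and kn: "\<And>s. s < m \<Longrightarrow> k s \<ge> 0"
  shows "wtH m k x y (wL f m (wD f)) = (\<Sum>s<m. k s)"
proof -
  let ?d = "\<lambda>s j. if j \<le> 0 then 2 else if j \<le> k s then 1 else (0::int)"
  have "wtH m k x y (wL f m (wD f)) = (\<Sum>s<m. k s * (?d s (k s) - ?d s (k s + 1)))"
    unfolding wL_D[OF f]
  proof (rule wtH_single_jump)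
    fix s j assume "s < m"
    then show "int (wdimc s ((wvecs m \<times> wvecs m) \<inter> wFil m k x y j)) = ?d s j"
      using dim_Fil_D xy by blast
  qed auto
  also have "\<dots> = (\<Sum>s<m. k s)"
  proof (rule sum.cong[OF refl])
    fix s assume "s \<in> {..<m}"
    then have "k s \<ge> 0" using kn by auto
    then show "k s * (?d s (k s) - ?d s (k s + 1)) = k s" by (cases "k s = 0") auto
  qed
  finally show ?thesis .
qed

lemma hodge_D2:
  assumes f: "0 < f" and xy: "\<And>s. s < m \<Longrightarrow> (x s, y s) \<noteq> (0::'a::field, 0)"
    and kn: "\<And>s. s < m \<Longrightarrow> k s \<ge> 0"
  shows "wtH m k x y (wL f m (wD2 f)) = (\<Sum>s\<in>{s. s < m \<and> x s = 0}. k s)"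
proof -
  let ?d = "\<lambda>s j. if j \<le> 0 then 1 else if j \<le> k s \<and> x s = 0 then 1 else (0::int)"
  have "wtH m k x y (wL f m (wD2 f)) = (\<Sum>s<m. k s * (?d s (k s) - ?d s (k s + 1)))"
    unfolding wL_D2[OF f]
  proof (rule wtH_single_jump)
    fix s j assume "s < m"
    then show "int (wdimc s (({0} \<times> wvecs m) \<inter> wFil m k x y j)) = ?d s j"
      using dim_Fil_D2 xy by blast
  qed auto
  also have "\<dots> = (\<Sum>s<m. if x s = 0 then k s else 0)"
  proof (rule sum.cong[OF refl])
    fix s assume "s \<in> {..<m}"
    then have "k s \<ge> 0" using kn by auto
    then show "k s * (?d s (k s) - ?d s (k s + 1)) = (if x s = 0 then k s else 0)"
      by (cases "k s = 0") auto
  qed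
  also have "\<dots> = (\<Sum>s\<in>{s \<in> {..<m}. x s = 0}. k s)"
    by (rule sum.inter_filter[symmetric]) simp
  also have "{s \<in> {..<m}. x s = 0} = {s. s < m \<and> x s = 0}" by auto
  finally show ?thesis .
qed

lemma hodge_zero: "wtH m k (x::nat \<Rightarrow> 'a::field) y (wL f m {0}) = 0"
proof -
  have "wtH m k x y {0} = (\<Sum>s<m. 0 * ((\<lambda>j. 0::int) 0 - (\<lambda>j. 0::int) (0 + 1)))"
  proof (rule wtH_single_jump[where d="\<lambda>s j. 0" and a="\<lambda>s. 0"])
    fix s j
    have "prj s ` ({0} \<inter> wFil m k x y j) \<subseteq> {0}" by auto
    then show "int (wdimc s ({0} \<inter> wFil m k x y j)) = 0" by (simp add: wdimc_prj)
  qed simp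
  then show ?thesis by (simp add: wL_zero)
qed


section \<open>Submodules stable under phi and N\<close>

lemma sub_add: "wsubmod f S \<Longrightarrow> u \<in> S \<Longrightarrow> w \<in> S \<Longrightarrow> u + w \<in> S"
  unfolding wsubmod_def by blast

lemma sub_smult: "wsubmod f S \<Longrightarrow> a \<in> wvecs f \<Longrightarrow> u \<in> S \<Longrightarrow> wsmult a u \<in> S"
  unfolding wsubmod_def by blast

lemma sub_zero: "wsubmod f S \<Longrightarrow> 0 \<in> S"
  unfolding wsubmod_def by blast

lemma sub_subset: "wsubmod f S \<Longrightarrow> S \<subseteq> wD f"
  unfolding wsubmod_def by blast

lemma sub_sum: "wsubmod f S \<Longrightarrow> \<forall>i\<in>A. g i \<in> S \<Longrightarrow> sum g A \<in> S"
  by (induction A rule: infinite_finite_induct) (auto simp: sub_zero sub_add)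

text \<open>The primitive idempotents of E^f = L_0 \<otimes> E.\<close>
definition evec :: "nat \<Rightarrow> nat \<Rightarrow> 'a::zero_neq_one" where
  "evec l = (\<lambda>i. if i = l then 1 else 0)"

lemma sum_evec: "(\<Sum>i<f. evec i) = wcst f (1::'a::comm_ring_1)"
  by (rule ext) (simp add: fun_sum_apply evec_def wcst_def)

lemma shift_evec:
  assumes l: "l < f"
  shows "wshift f 1 (evec l) = evec ((l + f - 1) mod f)"
proof (rule ext)
  fix t
  show "wshift f 1 (evec l) t = evec ((l + f - 1) mod f) t"
  proof (cases "t < f")
    case False
    have "(l + f - 1) mod f < f" using l by simp
    then show ?thesis using False by (auto simp: wshift_def evec_def)
  next
    case True
    have m: "(t + 1) mod f = (if t + 1 = f then 0 else t + 1)"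
      using True by (auto simp: Suc_lessI)
    have "((t + 1) mod f = l) \<longleftrightarrow> (t = (l + f - 1) mod f)"
    proof (cases l)
      case 0
      have "(0 + f - 1) mod f = f - 1" using True by simp
      then show ?thesis using 0 True m by auto
    next
      case (Suc c)
      have "(l + f - 1) mod f = c" using l Suc by (simp add: mod_add_right_eq[symmetric])
      then show ?thesis using Suc m l by auto
    qed
    then show ?thesis using True by (auto simp: wshift_def evec_def)
  qed
qed

lemma cyclic_descent:
  assumes f: "0 < (f::nat)" and l: "l < f" and Ql: "Q l"
    and step: "\<And>i. i < f \<Longrightarrow> Q i \<Longrightarrow> Q ((i + f - 1) mod f)"
  shows "\<forall>i<f. Q i"
proof -
  have down: "n < f \<Longrightarrow> Q n \<Longrightarrow> \<forall>i\<le>n. Q i" for n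
  proof (induction n)
    case 0 then show ?case by simp
  next
    case (Suc n)
    have "(Suc n + f - 1) mod f = n" using Suc.prems(1) by simp
    then have "Q n" using step[OF Suc.prems(1,2)] by simp
    then have "\<forall>i\<le>n. Q i" using Suc by simp
    then show ?case using Suc.prems(2) le_Suc_eq by blast
  qed
  have "Q 0" using down[OF l Ql] by simp
  then have "Q (f - 1)" using step[of 0] f by simp
  then show ?thesis using down[of "f - 1"] f by auto
qed

lemma nonzero_coordinate: "a \<in> wvecs f \<Longrightarrow> a \<noteq> 0 \<Longrightarrow> \<exists>l<f. a l \<noteq> 0"
  by (auto simp: wvecs_def fun_eq_iff) (metis not_less)

text \<open>Let emb embed E^f as a coordinate line of D on which phi acts as c times the Frobenius
  shift (c nonzero).  A phi-stable submodule containing a nonzero vector of this line contains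
  the whole line: the vector can be scaled to an idempotent e_l, and phi moves e_l to
  c e_(l-1) cyclically.\<close>
lemma coordinate_line_in_submodule:
  fixes S :: "((nat \<Rightarrow> 'a::field) \<times> (nat \<Rightarrow> 'a)) set"
    and emb :: "(nat \<Rightarrow> 'a) \<Rightarrow> (nat \<Rightarrow> 'a) \<times> (nat \<Rightarrow> 'a)"
  assumes f: "0 < f" and c: "c \<noteq> 0" and sub: "wsubmod f S" and ph: "wphi p f \<delta> ` S \<subseteq> S"
    and emb_phi: "\<And>a. wphi p f \<delta> (emb a) = emb (wcst f c * wshift f 1 a)"
    and emb_smult: "\<And>a b. wsmult a (emb b) = emb (a * b)"
    and emb_add: "\<And>a b. emb (a + b) = emb a + emb b" and emb_zero: "emb 0 = 0"
    and a: "a \<in> wvecs f" "a \<noteq> 0" "emb a \<in> S" and b: "b \<in> wvecs f"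
  shows "emb b \<in> S"
proof -
  obtain l where l: "l < f" "a l \<noteq> 0" using nonzero_coordinate[OF a(1,2)] by blast
  have "wsmult (\<lambda>i. if i = l then inverse (a l) else 0) (emb a) \<in> S"
    using sub_smult[OF sub wvecs_single[OF l(1)] a(3)] .
  moreover have "(\<lambda>i. if i = l then inverse (a l) else 0) * a = evec l"
    using l(2) by (auto simp: evec_def fun_eq_iff)
  ultimately have start: "emb (evec l) \<in> S" by (simp add: emb_smult)
  have all: "\<forall>i<f. emb (evec i) \<in> S"
  proof (rule cyclic_descent[where Q="\<lambda>i. emb (evec i) \<in> S", OF f l(1) start])
    fix i assume i: "i < f" and Q: "emb (evec i) \<in> S"
    have "(i + f - 1) mod f < f" using f by simp
    then have "wcst f (inverse c) * (wcst f c * evec ((i + f - 1) mod f)) = evec ((i + f - 1) mod f)"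
      using c by (auto simp: wcst_def evec_def fun_eq_iff)
    then have "wcst f (inverse c) * (wcst f c * wshift f 1 (evec i)) = evec ((i + f - 1) mod f)"
      unfolding shift_evec[OF i] .
    moreover have "wsmult (wcst f (inverse c)) (wphi p f \<delta> (emb (evec i))) \<in> S"
      using Q ph sub_smult[OF sub wcst_vec] by blast
    ultimately show "emb (evec ((i + f - 1) mod f)) \<in> S" by (simp add: emb_phi emb_smult)
  qed
  have "(\<Sum>i<f. wsmult b (emb (evec i))) \<in> S"
    using all sub_smult[OF sub b] by (intro sub_sum[OF sub]) auto
  moreover have "(\<Sum>i<f. wsmult b (emb (evec i))) = emb b"
  proof -
    have "(\<Sum>i<f. wsmult b (emb (evec i))) = emb (\<Sum>i<f. b * evec i)"
      using sum_comp_morphism[of emb, OF emb_zero emb_add] by (simp add: emb_smult comp_def)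
    also have "(\<Sum>i<f. b * evec i) = b"
      by (simp add: sum_distrib_left[symmetric] sum_evec mult_wcst1[OF b])
    finally show ?thesis .
  qed
  ultimately show ?thesis by simp
qed

lemma line1_in_submodule:
  fixes S :: "((nat \<Rightarrow> 'a::field) \<times> (nat \<Rightarrow> 'a)) set"
  assumes "0 < f" "of_nat p * \<delta> \<noteq> 0" "wsubmod f S" "wphi p f \<delta> ` S \<subseteq> S"
    and "a \<in> wvecs f" "a \<noteq> 0" "(a, 0) \<in> S" "b \<in> wvecs f"
  shows "(b, 0) \<in> S"
  by (rule coordinate_line_in_submodule[where emb="\<lambda>a. (a, 0)" and c="of_nat p * \<delta>"])
     (use assms in \<open>simp_all add: wphi_def wsmult_def wshift_zero zero_prod_def\<close>)

lemma line2_in_submodule: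
  fixes S :: "((nat \<Rightarrow> 'a::field) \<times> (nat \<Rightarrow> 'a)) set"
  assumes "0 < f" "\<delta> \<noteq> 0" "wsubmod f S" "wphi p f \<delta> ` S \<subseteq> S"
    and "a \<in> wvecs f" "a \<noteq> 0" "(0, a) \<in> S" "b \<in> wvecs f"
  shows "(0, b) \<in> S"
  by (rule coordinate_line_in_submodule[where emb="\<lambda>a. (0, a)" and c=\<delta>])
     (use assms in \<open>simp_all add: wphi_def wsmult_def wshift_zero zero_prod_def\<close>)

lemma stable_submodules:
  fixes S :: "((nat \<Rightarrow> 'a::field) \<times> (nat \<Rightarrow> 'a)) set"
  assumes f: "0 < f" and d: "\<delta> \<noteq> 0" and pd: "of_nat p * \<delta> \<noteq> 0"
    and sub: "wsubmod f S" and ph: "wphi p f \<delta> ` S \<subseteq> S" and nn: "wN ` S \<subseteq> S"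
  shows "S = {0} \<or> S = wD2 f \<or> S = wD f"
proof (cases "\<exists>u\<in>S. fst u \<noteq> 0")
  case True
  then obtain a b where ab: "(a, b) \<in> S" "a \<noteq> 0" by auto
  then have av: "a \<in> wvecs f" and bv: "b \<in> wvecs f" using sub_subset[OF sub] by (auto simp: wD_def)
  have "(0, a) \<in> S" using nn ab(1) by (force simp: wN_def)
  then have line2: "(0, b') \<in> S" if "b' \<in> wvecs f" for b'
    using line2_in_submodule[OF f d sub ph av ab(2)] that by blast
  have "- b \<in> wvecs f" using bv by (auto simp: wvecs_def)
  then have "(a, b) + (0, - b) \<in> S" by (rule sub_add[OF sub ab(1) line2])
  then have "(a, 0) \<in> S" by simp
  then have line1: "(a', 0) \<in> S" if "a' \<in> wvecs f" for a'
    using line1_in_submodule[OF f pd sub ph av ab(2)] that by blast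
  have "wD f \<subseteq> S"
  proof
    fix u :: "(nat \<Rightarrow> 'a) \<times> (nat \<Rightarrow> 'a)" assume "u \<in> wD f"
    then obtain a' b' where u: "u = (a', b')" "a' \<in> wvecs f" "b' \<in> wvecs f" by (auto simp: wD_def)
    have "(a', 0) + (0, b') \<in> S" using sub_add[OF sub line1[OF u(2)] line2[OF u(3)]] .
    then show "u \<in> S" using u(1) by simp
  qed
  then show ?thesis using sub_subset[OF sub] by blast
next
  case False
  then have S_D2: "S \<subseteq> wD2 f" using sub_subset[OF sub] by (force simp: wD_def wD2_def)
  show ?thesis
  proof (cases "S \<subseteq> {0}")
    case True then show ?thesis using sub_zero[OF sub] by blast
  next
    case False
    then obtain u where u: "u \<in> S" "u \<noteq> 0" by blast
    then obtain b where b: "u = (0, b)" "b \<in> wvecs f" using S_D2 by (auto simp: wD2_def)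
    have "b \<noteq> 0" using u(2) b(1) by (simp add: zero_prod_def)
    then have "wD2 f \<subseteq> S"
      using line2_in_submodule[OF f d sub ph b(2)] u(1) b(1) by (auto simp: wD2_def)
    then show ?thesis using S_D2 by blast
  qed
qed


definition std_basis :: "nat \<Rightarrow> nat \<Rightarrow> (nat \<Rightarrow> 'a::zero_neq_one) \<times> (nat \<Rightarrow> 'a)" where
  "std_basis f j = (if j = 0 then eta1 f else eta2 f)"

definition std_matrix :: "nat \<Rightarrow> 'a::comm_ring_1 \<Rightarrow> 'a \<Rightarrow> nat \<Rightarrow> nat \<Rightarrow> nat \<Rightarrow> 'a" where
  "std_matrix f q \<delta> i j = (if i = 0 \<and> j = 0 then wcst f q else if i = 1 \<and> j = 1 then wcst f \<delta> else 0)"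

lemma std_basis_comb:
  fixes a b :: "nat \<Rightarrow> 'a::comm_ring_1"
  shows "a \<in> wvecs f \<Longrightarrow> b \<in> wvecs f \<Longrightarrow> (\<Sum>j<2. wsmult (if j = 0 then a else b) (std_basis f j)) = (a, b)"
  by (simp add: numeral_2_eq_2 std_basis_def wsmult_def mult_wcst1)

lemma wbasis_std: "wbasis f (wD f) 2 (std_basis f :: nat \<Rightarrow> (nat \<Rightarrow> 'a::field) \<times> (nat \<Rightarrow> 'a))"
  unfolding wbasis_def
proof (intro conjI)
  show "\<forall>j<2. std_basis f j \<in> (wD f :: ((nat \<Rightarrow> 'a) \<times> (nat \<Rightarrow> 'a)) set)"
    by (auto simp: std_basis_def wD_def)
  have comb: "(\<Sum>j<2. wsmult (c j) (std_basis f j)) = (c 0, c 1)"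
    if "\<forall>j<2. c j \<in> wvecs f" for c :: "nat \<Rightarrow> nat \<Rightarrow> 'a"
    using std_basis_comb[of "c 0" f "c 1"] that by (simp add: numeral_2_eq_2 std_basis_def)
  show "(wD f :: ((nat \<Rightarrow> 'a) \<times> (nat \<Rightarrow> 'a)) set)
      = {\<Sum>j<2. wsmult (c j) (std_basis f j) | c. \<forall>j<2. c j \<in> wvecs f}"
  proof (intro Set.set_eqI iffI)
    fix u :: "(nat \<Rightarrow> 'a) \<times> (nat \<Rightarrow> 'a)" assume u: "u \<in> wD f"
    define coord where "coord = (\<lambda>j::nat. if j = 0 then fst u else snd u)"
    have "u = (\<Sum>j<2. wsmult (coord j) (std_basis f j))"
      using u std_basis_comb[of "fst u" f "snd u"] by (auto simp: wD_def coord_def)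
    moreover have "\<forall>j<2. coord j \<in> wvecs f" using u by (auto simp: wD_def coord_def)
    ultimately show "u \<in> {\<Sum>j<2. wsmult (c j) (std_basis f j) | c. \<forall>j<2. c j \<in> wvecs f}"
      by blast
  next
    fix u :: "(nat \<Rightarrow> 'a) \<times> (nat \<Rightarrow> 'a)"
    assume "u \<in> {\<Sum>j<2. wsmult (c j) (std_basis f j) | c. \<forall>j<2. c j \<in> wvecs f}"
    then obtain c where "u = (\<Sum>j<2. wsmult (c j) (std_basis f j))" and c: "\<forall>j<2. c j \<in> wvecs f"
      by blast
    then have "u = (c 0, c 1)" using comb[OF c] by simp
    then show "u \<in> wD f" using c by (simp add: wD_def)
  qed
  show "\<forall>c :: nat \<Rightarrow> nat \<Rightarrow> 'a. (\<forall>j<2. c j \<in> wvecs f)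
            \<and> (\<Sum>j<2. wsmult (c j) (std_basis f j)) = 0 \<longrightarrow> (\<forall>j<2. c j = 0)"
  proof (intro allI impI)
    fix c :: "nat \<Rightarrow> nat \<Rightarrow> 'a" and j :: nat
    assume h: "(\<forall>j<2. c j \<in> wvecs f) \<and> (\<Sum>j<2. wsmult (c j) (std_basis f j)) = 0" and j: "j < 2"
    then have "(c 0, c 1) = 0" using comb[of c] by simp
    then show "c j = 0" using j by (auto simp: zero_prod_def less_2_cases_iff)
  qed
qed

lemma wmatrix_std: "wmatrix p f \<delta> 2 (std_basis f) (std_matrix f (of_nat p * \<delta>) (\<delta>::'a::field))"
  unfolding wmatrix_def
proof (intro conjI)
  show "\<forall>i<2. \<forall>j<2. std_matrix f (of_nat p * \<delta>) \<delta> i j \<in> wvecs f"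
    by (simp add: std_matrix_def)
  show "\<forall>j<2. wphi p f \<delta> (std_basis f j)
              = (\<Sum>i<2. wsmult (std_matrix f (of_nat p * \<delta>) \<delta> i j) (std_basis f i))"
    by (auto simp: numeral_2_eq_2 less_Suc_eq std_matrix_def std_basis_def wphi_def wshift_wcst
        wshift_zero wcst_mult wsmult_def zero_prod_def)
qed

lemma wbasis_D2: "wbasis f (wD2 f) 1 (\<lambda>j. eta2 f :: (nat \<Rightarrow> 'a::field) \<times> (nat \<Rightarrow> 'a))"
  unfolding wbasis_def
proof (intro conjI)
  have comb: "(\<Sum>j<(1::nat). wsmult (c j) (eta2 f)) = (0, c 0)"
    if "c 0 \<in> wvecs f" for c :: "nat \<Rightarrow> nat \<Rightarrow> 'a"
  proof -
    have "{..<1::nat} = {0}" by auto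
    then show ?thesis using that by (simp add: wsmult_def mult_wcst1)
  qed
  show "\<forall>j<(1::nat). eta2 f \<in> (wD2 f :: ((nat \<Rightarrow> 'a) \<times> (nat \<Rightarrow> 'a)) set)"
    by (simp add: wD2_def)
  show "(wD2 f :: ((nat \<Rightarrow> 'a) \<times> (nat \<Rightarrow> 'a)) set)
      = {\<Sum>j<(1::nat). wsmult (c j) (eta2 f) | c. \<forall>j<(1::nat). c j \<in> wvecs f}"
  proof (intro Set.set_eqI iffI)
    fix u :: "(nat \<Rightarrow> 'a) \<times> (nat \<Rightarrow> 'a)" assume "u \<in> wD2 f"
    then obtain b where b: "u = (0, b)" "b \<in> wvecs f" by (auto simp: wD2_def)
    define coord where "coord = (\<lambda>j::nat. b)"
    show "u \<in> {\<Sum>j<(1::nat). wsmult (c j) (eta2 f) | c. \<forall>j<(1::nat). c j \<in> wvecs f}"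
      unfolding mem_Collect_eq
    proof (intro exI[of _ coord] conjI)
      show "u = (\<Sum>j<(1::nat). wsmult (coord j) (eta2 f))" using b comb[of coord] by (simp add: coord_def)
      show "\<forall>j<(1::nat). coord j \<in> wvecs f" using b by (simp add: coord_def)
    qed
  next
    fix u :: "(nat \<Rightarrow> 'a) \<times> (nat \<Rightarrow> 'a)"
    assume "u \<in> {\<Sum>j<(1::nat). wsmult (c j) (eta2 f) | c. \<forall>j<(1::nat). c j \<in> wvecs f}"
    then obtain c where "u = (\<Sum>j<(1::nat). wsmult (c j) (eta2 f))" and c: "\<forall>j<(1::nat). c j \<in> wvecs f"
      by (elim CollectE exE conjE)
    then show "u \<in> wD2 f" using comb[of c] by (simp add: wD2_def)
  qed
  show "\<forall>c :: nat \<Rightarrow> nat \<Rightarrow> 'a. (\<forall>j<(1::nat). c j \<in> wvecs f)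
            \<and> (\<Sum>j<(1::nat). wsmult (c j) (eta2 f)) = 0 \<longrightarrow> (\<forall>j<(1::nat). c j = 0)"
  proof (intro allI impI)
    fix c :: "nat \<Rightarrow> nat \<Rightarrow> 'a" and j :: nat
    assume h: "(\<forall>j<(1::nat). c j \<in> wvecs f) \<and> (\<Sum>j<(1::nat). wsmult (c j) (eta2 f)) = 0" and j: "j < 1"
    then have "(0, c 0) = (0 :: (nat \<Rightarrow> 'a) \<times> (nat \<Rightarrow> 'a))" using comb[of c] by simp
    then show "c j = 0" using j by (simp add: zero_prod_def)
  qed
qed

lemma wmatrix_D2: "wmatrix p f \<delta> 1 (\<lambda>j. eta2 f) (\<lambda>i j. wcst f (\<delta>::'a::field))"
  unfolding wmatrix_def
  by (auto simp: wcst_vec wphi_def wshift_wcst wshift_zero wcst_mult wsmult_def)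

lemma wD2_stable:
  shows "wsubmod f (wD2 f :: ((nat \<Rightarrow> 'a::field) \<times> (nat \<Rightarrow> 'a)) set)"
    and "wphi p f \<delta> ` wD2 f \<subseteq> wD2 f"
    and "wN ` wD2 f \<subseteq> wD2 f"
proof -
  show "wsubmod f (wD2 f :: ((nat \<Rightarrow> 'a) \<times> (nat \<Rightarrow> 'a)) set)"
    unfolding wsubmod_def by (auto simp: wD2_def wD_def wvecs_def wsmult_def zero_prod_def)
  show "wphi p f \<delta> ` wD2 f \<subseteq> wD2 f"
    by (auto simp: wD2_def wphi_def wshift_zero wvecs_def wcst_def)
  show "wN ` wD2 f \<subseteq> wD2 f"
    by (auto simp: wD2_def wN_def)
qed

lemma wD2_proper:
  assumes f: "0 < f"
  shows "(wD2 f :: ((nat \<Rightarrow> 'a::field) \<times> (nat \<Rightarrow> 'a)) set) \<noteq> wD f"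
    and "(wD2 f :: ((nat \<Rightarrow> 'a) \<times> (nat \<Rightarrow> 'a)) set) \<noteq> {0}"
proof -
  have "wcst f (1::'a) 0 \<noteq> 0" using f by (simp add: wcst_def)
  then have one: "wcst f (1::'a) \<noteq> 0" by auto
  have "(eta1 f :: (nat \<Rightarrow> 'a) \<times> (nat \<Rightarrow> 'a)) \<in> wD f - wD2 f"
    using one by (simp add: wD_def wD2_def)
  then show "(wD2 f :: ((nat \<Rightarrow> 'a) \<times> (nat \<Rightarrow> 'a)) set) \<noteq> wD f" by blast
  have "(eta2 f :: (nat \<Rightarrow> 'a) \<times> (nat \<Rightarrow> 'a)) \<in> wD2 f - {0}"
    using one by (simp add: wD2_def zero_prod_def)
  then show "(wD2 f :: ((nat \<Rightarrow> 'a) \<times> (nat \<Rightarrow> 'a)) set) \<noteq> {0}" by blast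
qed


section \<open>Weak admissibility\<close>

text \<open>Only D and D_2 have to be tested: t_H(D_L) = t_N(D) reads
  2 ef v(delta) + ef = sum k_i and t_H(D_2,L) \<le> t_N(D_2) reads sum_{x_i = 0} k_i \<le> ef v(delta).\<close>
lemma weakly_admissible_iff:
  fixes v :: "'a::field \<Rightarrow> rat"
  assumes vm: "\<And>a b. a \<noteq> 0 \<Longrightarrow> b \<noteq> 0 \<Longrightarrow> v (a * b) = v a + v b"
    and vp: "v (of_nat p) = 1" and p0: "(of_nat p :: 'a) \<noteq> 0" and d: "\<delta> \<noteq> 0" and f: "0 < f"
    and xy: "\<And>s. s < e*f \<Longrightarrow> (x s, y s) \<noteq> (0, 0)" and kn: "\<And>s. s < e*f \<Longrightarrow> k s \<ge> 0"
  shows "wweakly_admissible v p \<delta> e f k x y \<longleftrightarrow>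
         (2 * of_nat (e*f) * v \<delta> + of_nat (e*f) = of_int (\<Sum>i<e*f. k i)
          \<and> of_nat (e*f) * v \<delta> \<ge> of_int (\<Sum>i\<in>{i. i < e*f \<and> x i = 0}. k i))"
    (is "_ \<longleftrightarrow> ?slope_D \<and> ?slope_D2")
proof -
  have tH_D: "wtH (e*f) k x y (wL f (e*f) (wD f)) = (\<Sum>i<e*f. k i)"
    by (rule hodge_D[OF f xy kn])
  have tH_D2: "wtH (e*f) k x y (wL f (e*f) (wD2 f)) = (\<Sum>i\<in>{i. i < e*f \<and> x i = 0}. k i)"
    by (rule hodge_D2[OF f xy kn])
  have tN_D: "wtN v e f r A = 2 * of_nat (e*f) * v \<delta> + of_nat (e*f)"
    if "wbasis f (wD f) r bs" "wmatrix p f \<delta> r bs A" for r bs A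
    by (rule newton_D[OF vm vp p0 d f that])
  have tN_D2: "wtN v e f r A = of_nat (e*f) * v \<delta>"
    if "wbasis f (wD2 f) r bs" "wmatrix p f \<delta> r bs A" for r bs A
    by (rule newton_D2[OF vm d f that])
  show ?thesis
  proof
    assume W: "wweakly_admissible v p \<delta> e f k x y"
    have W_D: "\<forall>r bs A. wbasis f (wD f) r bs \<and> wmatrix p f \<delta> r bs A \<longrightarrow>
        of_int (wtH (e*f) k x y (wL f (e*f) (wD f))) = wtN v e f r A"
      and W_sub: "\<forall>S. wsubmod f S \<and> wphi p f \<delta> ` S \<subseteq> S \<and> wN ` S \<subseteq> S \<longrightarrow>
        (\<forall>r bs A. wbasis f S r bs \<and> wmatrix p f \<delta> r bs A \<longrightarrow>
           of_int (wtH (e*f) k x y (wL f (e*f) S)) \<le> wtN v e f r A)"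
      using W unfolding wweakly_admissible_def by blast+
    have "?slope_D"
      using W_D[rule_format, OF conjI[OF wbasis_std wmatrix_std]] tH_D tN_D[OF wbasis_std wmatrix_std]
      by simp
    moreover have "?slope_D2"
      using W_sub[rule_format, OF conjI[OF wD2_stable(1) conjI[OF wD2_stable(2,3)]]
          conjI[OF wbasis_D2 wmatrix_D2]] tH_D2 tN_D2[OF wbasis_D2 wmatrix_D2]
      by simp
    ultimately show "?slope_D \<and> ?slope_D2" ..
  next
    assume slopes: "?slope_D \<and> ?slope_D2"
    have pd: "of_nat p * \<delta> \<noteq> 0" using p0 d by simp
    show "wweakly_admissible v p \<delta> e f k x y"
      unfolding wweakly_admissible_def
    proof (intro conjI allI impI)
      fix r bs A assume "wbasis f (wD f) r bs \<and> wmatrix p f \<delta> r bs A"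
      then show "of_int (wtH (e*f) k x y (wL f (e*f) (wD f))) = wtN v e f r A"
        using slopes tH_D tN_D by auto
    next
      fix S r bs A
      assume S: "wsubmod f S \<and> wphi p f \<delta> ` S \<subseteq> S \<and> wN ` S \<subseteq> S"
        and B: "wbasis f S r bs \<and> wmatrix p f \<delta> r bs A"
      from stable_submodules[OF f d pd] S consider "S = {0}" | "S = wD2 f" | "S = wD f" by blast
      then show "of_int (wtH (e*f) k x y (wL f (e*f) S)) \<le> wtN v e f r A"
      proof cases
        case 1
        then have "wtN v e f r A = 0" using B newton_zero[OF vm f] by auto
        then show ?thesis using 1 hodge_zero[of "e*f" k x y f] by simp
      next
        case 2 then show ?thesis using B slopes tH_D2 tN_D2 by auto
      next
        case 3 then show ?thesis using B slopes tH_D tN_D by auto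
      qed
    qed
  qed
qed


section \<open>The Galois action\<close>

text \<open>An eigenvector of phi for the eigenvalue p delta is a constant multiple of eta_1: in the
  eta_1-coordinate phi is p delta times the Frobenius shift, and in the eta_2-coordinate the
  eigenvalue equation would force b_(l+1) = p b_l for all l, hence (p^f - 1) b_0 = 0.\<close>
lemma phi_eigenvector:
  fixes a b :: "nat \<Rightarrow> 'a::field_char_0"
  assumes f: "0 < f" and d: "\<delta> \<noteq> 0" and p: "prime p"
    and av: "a \<in> wvecs f" and bv: "b \<in> wvecs f"
    and eq: "wsmult (wcst f (of_nat p * \<delta>)) (a, b) = wphi p f \<delta> (a, b)"
  shows "a = wcst f (a 0) \<and> b = 0"
proof -
  have p1: "1 < p" by (rule prime_gt_1_nat[OF p])
  have p0: "(of_nat p :: 'a) \<noteq> 0" using p1 by simp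
  define q where "q = (of_nat p * \<delta> :: 'a)"
  have q0: "q \<noteq> 0" using p0 d by (simp add: q_def)
  have step: "a (Suc i mod f) = a i \<and> b (Suc i mod f) = of_nat p * b i" if i: "i < f" for i
  proof -
    have e1: "(wcst f q * a) i = (wcst f q * wshift f 1 a) i"
      using eq by (simp add: wsmult_def wphi_def q_def)
    have e2: "(wcst f q * b) i = (wcst f \<delta> * wshift f 1 b) i"
      using eq by (simp add: wsmult_def wphi_def q_def)
    from e1 i have "q * a i = q * a (Suc i mod f)" by (simp add: wcst_def wshift_def)
    then have A: "a (Suc i mod f) = a i" using q0 by simp
    from e2 i have "q * b i = \<delta> * b (Suc i mod f)" by (simp add: wcst_def wshift_def)
    then have "\<delta> * b (Suc i mod f) = \<delta> * (of_nat p * b i)" unfolding q_def by (metis mult.assoc mult.commute)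
    then have B: "b (Suc i mod f) = of_nat p * b i" using mult_left_cancel[OF d] by blast
    show ?thesis using A B by simp
  qed
  have a_const: "i < f \<Longrightarrow> a i = a 0" for i
  proof (induction i)
    case 0 then show ?case by simp
  next
    case (Suc i)
    then have "a (Suc i mod f) = a i" using step[of i] by simp
    then show ?case using Suc by simp
  qed
  have b_pow: "i < f \<Longrightarrow> b i = of_nat p ^ i * b 0" for i
  proof (induction i)
    case 0 then show ?case by simp
  next
    case (Suc i)
    then have "b (Suc i mod f) = of_nat p * b i" using step[of i] by simp
    then show ?case using Suc by simp
  qed
  have "b 0 = of_nat p * b (f - 1)" using step[of "f - 1"] f by simp
  also have "\<dots> = of_nat p ^ f * b 0" using b_pow[of "f - 1"] f
    by (simp add: power_eq_if)
  finally have "(of_nat p ^ f - 1) * b 0 = 0" by (simp add: algebra_simps)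
  moreover have "(of_nat p ^ f :: 'a) \<noteq> 1"
  proof
    assume "(of_nat p ^ f :: 'a) = 1"
    then have "of_nat (p ^ f) = (1::'a)" by simp
    then have "p ^ f = 1" using of_nat_eq_1_iff by blast
    moreover have "1 < p ^ f" using one_less_power[OF p1 f] .
    ultimately show False by linarith
  qed
  ultimately have b00: "b 0 = 0" by simp
  have "b = 0"
  proof
    fix i show "b i = 0 i"
      using b_pow[of i] b00 bv by (cases "i < f") (auto simp: wvecs_def)
  qed
  moreover have "a = wcst f (a 0)"
  proof
    fix i show "a i = wcst f (a 0) i"
      using a_const[of i] av by (cases "i < f") (auto simp: wvecs_def wcst_def)
  qed
  ultimately show ?thesis by simp
qed

lemma equivariant_map_on_standard_basis:
  fixes ga :: "(nat \<Rightarrow> 'a::field_char_0) \<times> (nat \<Rightarrow> 'a) \<Rightarrow> (nat \<Rightarrow> 'a) \<times> (nat \<Rightarrow> 'a)"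
  assumes f: "0 < f" and d: "\<delta> \<noteq> 0" and p: "prime p"
    and closed: "\<And>u. u \<in> wD f \<Longrightarrow> ga u \<in> wD f"
    and semilin: "\<And>a u. a \<in> wvecs f \<Longrightarrow> u \<in> wD f \<Longrightarrow> ga (wsmult a u) = wsmult (wshift f s a) (ga u)"
    and phi: "\<And>u. u \<in> wD f \<Longrightarrow> ga (wphi p f \<delta> u) = wphi p f \<delta> (ga u)"
    and N: "\<And>u. u \<in> wD f \<Longrightarrow> ga (wN u) = wN (ga u)"
  defines "c \<equiv> fst (ga (eta1 f)) 0"
  shows "ga (eta1 f) = (wcst f c, 0) \<and> ga (eta2 f) = (0, wcst f c)"
proof -
  have eta1: "eta1 f \<in> wD f" by (simp add: wD_def)
  obtain a b where ab: "ga (eta1 f) = (a, b)" by fastforce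
  then have av: "a \<in> wvecs f" and bv: "b \<in> wvecs f" using closed[OF eta1] by (auto simp: wD_def)
  have "wphi p f \<delta> (eta1 f) = wsmult (wcst f (of_nat p * \<delta>)) (eta1 f)"
    by (simp add: wphi_def wsmult_def wshift_wcst wshift_zero wcst_mult)
  then have "wsmult (wcst f (of_nat p * \<delta>)) (a, b) = wphi p f \<delta> (a, b)"
    using semilin[OF wcst_vec eta1] phi[OF eta1] ab by (simp add: wshift_wcst)
  then have "a = wcst f (a 0) \<and> b = 0" by (rule phi_eigenvector[OF f d p av bv])
  then have img1: "ga (eta1 f) = (wcst f c, 0)" using ab by (simp add: c_def)
  have "ga (eta2 f) = wN (ga (eta1 f))" using N[OF eta1] by (simp add: wN_def)
  then show ?thesis using img1 by (simp add: wN_def)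
qed

lemma galois_character:
  fixes G :: "('g, 'b) monoid_scheme" and nG :: "'g \<Rightarrow> nat"
    and gact :: "'g \<Rightarrow> (nat \<Rightarrow> 'a::field_char_0) \<times> (nat \<Rightarrow> 'a) \<Rightarrow> (nat \<Rightarrow> 'a) \<times> (nat \<Rightarrow> 'a)"
  assumes G: "group G" and f: "0 < f" and d: "\<delta> \<noteq> 0" and p: "prime p"
    and closed: "\<And>g u. g \<in> carrier G \<Longrightarrow> u \<in> wD f \<Longrightarrow> gact g u \<in> wD f"
    and semilin: "\<And>g a u. g \<in> carrier G \<Longrightarrow> a \<in> wvecs f \<Longrightarrow> u \<in> wD f \<Longrightarrow>
                   gact g (wsmult a u) = wsmult (wshift f (nG g) a) (gact g u)"
    and one: "\<And>u. u \<in> wD f \<Longrightarrow> gact \<one>\<^bsub>G\<^esub> u = u"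
    and mult: "\<And>g h u. g \<in> carrier G \<Longrightarrow> h \<in> carrier G \<Longrightarrow> u \<in> wD f \<Longrightarrow>
                   gact (g \<otimes>\<^bsub>G\<^esub> h) u = gact g (gact h u)"
    and phi: "\<And>g u. g \<in> carrier G \<Longrightarrow> u \<in> wD f \<Longrightarrow>
                   gact g (wphi p f \<delta> u) = wphi p f \<delta> (gact g u)"
    and N: "\<And>g u. g \<in> carrier G \<Longrightarrow> u \<in> wD f \<Longrightarrow> gact g (wN u) = wN (gact g u)"
  shows "\<exists>\<chi> :: 'g \<Rightarrow> 'a.
            (\<forall>g\<in>carrier G. \<chi> g \<noteq> 0)
          \<and> (\<forall>g\<in>carrier G. \<forall>h\<in>carrier G. \<chi> (g \<otimes>\<^bsub>G\<^esub> h) = \<chi> g * \<chi> h)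
          \<and> (\<forall>g\<in>carrier G. gact g (eta1 f) = (wcst f (\<chi> g), 0)
                            \<and> gact g (eta2 f) = (0, wcst f (\<chi> g)))"
proof -
  define \<chi> where "\<chi> = (\<lambda>g. fst (gact g (eta1 f)) 0)"
  have eta1: "eta1 f \<in> wD f" by (simp add: wD_def)
  have act: "gact g (eta1 f) = (wcst f (\<chi> g), 0) \<and> gact g (eta2 f) = (0, wcst f (\<chi> g))"
    if g: "g \<in> carrier G" for g
    unfolding \<chi>_def
    by (rule equivariant_map_on_standard_basis[OF f d p closed[OF g] semilin[OF g] phi[OF g] N[OF g]])
  have \<chi>_mult: "\<chi> (g \<otimes>\<^bsub>G\<^esub> h) = \<chi> g * \<chi> h" if g: "g \<in> carrier G" and h: "h \<in> carrier G" for g h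
  proof -
    have "gact (g \<otimes>\<^bsub>G\<^esub> h) (eta1 f) = gact g (wsmult (wcst f (\<chi> h)) (eta1 f))"
      using mult[OF g h eta1] act[OF h] by (simp add: wsmult_def wcst_mult)
    also have "\<dots> = wsmult (wcst f (\<chi> h)) (gact g (eta1 f))"
      using semilin[OF g wcst_vec eta1] by (simp add: wshift_wcst)
    also have "\<dots> = (wcst f (\<chi> h * \<chi> g), 0)" using act[OF g] by (simp add: wsmult_def wcst_mult)
    finally show ?thesis using f by (simp add: \<chi>_def wcst_def mult.commute)
  qed
  have \<chi>_nonzero: "\<chi> g \<noteq> 0" if g: "g \<in> carrier G" for g
  proof
    assume "\<chi> g = 0"
    moreover have "\<chi> (inv\<^bsub>G\<^esub> g \<otimes>\<^bsub>G\<^esub> g) = \<chi> (inv\<^bsub>G\<^esub> g) * \<chi> g"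
      by (rule \<chi>_mult[OF group.inv_closed[OF G g] g])
    moreover have "\<chi> \<one>\<^bsub>G\<^esub> = 1" using one[OF eta1] f by (simp add: \<chi>_def wcst_def)
    ultimately show False using group.l_inv[OF G g] by simp
  qed
  show ?thesis using act \<chi>_mult \<chi>_nonzero by blast
qed

lemma wD2_stable_semilinear:
  fixes ga :: "(nat \<Rightarrow> 'a::comm_ring_1) \<times> (nat \<Rightarrow> 'a) \<Rightarrow> (nat \<Rightarrow> 'a) \<times> (nat \<Rightarrow> 'a)"
  assumes semilin: "\<And>a u. a \<in> wvecs f \<Longrightarrow> u \<in> wD f \<Longrightarrow> ga (wsmult a u) = wsmult (wshift f s a) (ga u)"
    and eta2: "ga (eta2 f) = (0, wcst f c)"
  shows "ga ` wD2 f \<subseteq> wD2 f"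
proof
  fix w assume "w \<in> ga ` wD2 f"
  then obtain b where w: "w = ga (0, b)" and b: "b \<in> wvecs f" by (auto simp: wD2_def)
  have "(0, b) = wsmult b (eta2 f)" using b by (simp add: wsmult_def mult_wcst1)
  then have "w = (0, wshift f s b * wcst f c)"
    using w semilin[OF b, of "eta2 f"] eta2 by (simp add: wD_def wsmult_def)
  moreover have "wshift f s b * wcst f c \<in> wvecs f" by (simp add: wvecs_def wcst_def)
  ultimately show "w \<in> wD2 f" by (simp add: wD2_def)
qed

lemma wD2_stable_equivariant:
  fixes ga :: "(nat \<Rightarrow> 'a::field_char_0) \<times> (nat \<Rightarrow> 'a) \<Rightarrow> (nat \<Rightarrow> 'a) \<times> (nat \<Rightarrow> 'a)"
  assumes f: "0 < f" and d: "\<delta> \<noteq> 0" and p: "prime p"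
    and closed: "\<And>u. u \<in> wD f \<Longrightarrow> ga u \<in> wD f"
    and semilin: "\<And>a u. a \<in> wvecs f \<Longrightarrow> u \<in> wD f \<Longrightarrow> ga (wsmult a u) = wsmult (wshift f s a) (ga u)"
    and phi: "\<And>u. u \<in> wD f \<Longrightarrow> ga (wphi p f \<delta> u) = wphi p f \<delta> (ga u)"
    and N: "\<And>u. u \<in> wD f \<Longrightarrow> ga (wN u) = wN (ga u)"
  shows "ga ` wD2 f \<subseteq> wD2 f"
proof -
  have "ga (eta2 f) = (0, wcst f (fst (ga (eta1 f)) 0))"
    using equivariant_map_on_standard_basis[where ga=ga, OF f d p closed semilin phi N] by blast
  then show ?thesis using wD2_stable_semilinear[where ga=ga and s=s] semilin by blast
qed

lemma wD2_galois_stable: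
  fixes gact :: "'g \<Rightarrow> (nat \<Rightarrow> 'a::field_char_0) \<times> (nat \<Rightarrow> 'a) \<Rightarrow> (nat \<Rightarrow> 'a) \<times> (nat \<Rightarrow> 'a)"
  assumes f: "0 < f" and d: "\<delta> \<noteq> 0" and p: "prime p"
    and closed: "\<And>g u. g \<in> Gc \<Longrightarrow> u \<in> wD f \<Longrightarrow> gact g u \<in> wD f"
    and semilin: "\<And>g a u. g \<in> Gc \<Longrightarrow> a \<in> wvecs f \<Longrightarrow> u \<in> wD f \<Longrightarrow>
                   gact g (wsmult a u) = wsmult (wshift f (nG g) a) (gact g u)"
    and phi: "\<And>g u. g \<in> Gc \<Longrightarrow> u \<in> wD f \<Longrightarrow> gact g (wphi p f \<delta> u) = wphi p f \<delta> (gact g u)"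
    and N: "\<And>g u. g \<in> Gc \<Longrightarrow> u \<in> wD f \<Longrightarrow> gact g (wN u) = wN (gact g u)"
  shows "\<forall>g\<in>Gc. gact g ` wD2 f \<subseteq> wD2 f"
proof
  fix g assume g: "g \<in> Gc"
  show "gact g ` wD2 f \<subseteq> wD2 f"
    by (rule wD2_stable_equivariant[OF f d p closed[OF g] semilin[OF g] phi[OF g] N[OF g]])
qed


section \<open>Weakly admissible sub-objects\<close>

lemma proper_wa_subobject_iff:
  fixes v :: "'a::field \<Rightarrow> rat"
  assumes vm: "\<And>a b. a \<noteq> 0 \<Longrightarrow> b \<noteq> 0 \<Longrightarrow> v (a * b) = v a + v b"
    and d: "\<delta> \<noteq> 0" and pd: "of_nat p * \<delta> \<noteq> 0" and f: "0 < f"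
    and xy: "\<And>s. s < e*f \<Longrightarrow> (x s, y s) \<noteq> (0, 0)" and kn: "\<And>s. s < e*f \<Longrightarrow> k s \<ge> 0"
    and G_stable: "\<forall>g\<in>Gc. gact g ` wD2 f \<subseteq> wD2 f"
  shows "wwa_sub v p \<delta> e f k x y Gc gact S \<and> S \<noteq> wD f \<longleftrightarrow>
         S = wD2 f \<and> of_nat (e*f) * v \<delta> = of_int (\<Sum>i\<in>{i. i < e*f \<and> x i = 0}. k i)"
    (is "_ \<longleftrightarrow> _ \<and> ?equality")
proof -
  have tH_D2: "wtH (e*f) k x y (wL f (e*f) (wD2 f)) = (\<Sum>i\<in>{i. i < e*f \<and> x i = 0}. k i)"
    by (rule hodge_D2[OF f xy kn])
  have tN_D2: "wtN v e f r A = of_nat (e*f) * v \<delta>"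
    if "wbasis f (wD2 f) r bs" "wmatrix p f \<delta> r bs A" for r bs A
    by (rule newton_D2[OF vm d f that])
  show ?thesis
  proof
    assume S: "wwa_sub v p \<delta> e f k x y Gc gact S \<and> S \<noteq> wD f"
    then have S_D2: "S = wD2 f"
      using stable_submodules[OF f d pd] unfolding wwa_sub_def by blast
    obtain r bs A where "wbasis f S r bs" "wmatrix p f \<delta> r bs A"
        "of_int (wtH (e*f) k x y (wL f (e*f) S)) = wtN v e f r A"
      using S unfolding wwa_sub_def by blast
    then have ?equality using tH_D2 tN_D2 unfolding S_D2 by simp
    with S_D2 show "S = wD2 f \<and> ?equality" ..
  next
    assume S: "S = wD2 f \<and> ?equality"
    have "of_int (wtH (e*f) k x y (wL f (e*f) (wD2 f))) = wtN v e f 1 (\<lambda>i j. wcst f \<delta>)"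
      using S tH_D2 tN_D2[OF wbasis_D2 wmatrix_D2] by simp
    then have "\<exists>r bs A. wbasis f (wD2 f) r bs \<and> wmatrix p f \<delta> r bs A
        \<and> of_int (wtH (e*f) k x y (wL f (e*f) (wD2 f))) = wtN v e f r A"
      using wbasis_D2 wmatrix_D2 by blast
    then have "wwa_sub v p \<delta> e f k x y Gc gact (wD2 f)"
      unfolding wwa_sub_def
      using wD2_stable(1)[of f] wD2_stable(2)[of p f \<delta>] wD2_stable(3)[of f] wD2_proper(2)[OF f]
        G_stable
      by blast
    then show "wwa_sub v p \<delta> e f k x y Gc gact S \<and> S \<noteq> wD f" using S wD2_proper(1)[OF f] by simp
  qed
qed

lemma irreducible_iff_strict:
  fixes v :: "'a::field \<Rightarrow> rat"
  assumes vm: "\<And>a b. a \<noteq> 0 \<Longrightarrow> b \<noteq> 0 \<Longrightarrow> v (a * b) = v a + v b"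
    and d: "\<delta> \<noteq> 0" and pd: "of_nat p * \<delta> \<noteq> 0" and f: "0 < f"
    and xy: "\<And>s. s < e*f \<Longrightarrow> (x s, y s) \<noteq> (0, 0)" and kn: "\<And>s. s < e*f \<Longrightarrow> k s \<ge> 0"
    and G_stable: "\<forall>g\<in>Gc. gact g ` wD2 f \<subseteq> wD2 f"
    and slope_D2: "of_nat (e*f) * v \<delta> \<ge> of_int (\<Sum>i\<in>{i. i < e*f \<and> x i = 0}. k i)"
  shows "wirreducible v p \<delta> e f k x y Gc gact \<longleftrightarrow>
         of_nat (e*f) * v \<delta> > of_int (\<Sum>i\<in>{i. i < e*f \<and> x i = 0}. k i)"
proof -
  note proper = proper_wa_subobject_iff[where e=e and k=k and x=x and y=y,
      OF vm d pd f xy kn G_stable]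
  have "(\<exists>S. wwa_sub v p \<delta> e f k x y Gc gact S \<and> S \<noteq> wD f)
      \<longleftrightarrow> of_nat (e*f) * v \<delta> = of_int (\<Sum>i\<in>{i. i < e*f \<and> x i = 0}. k i)"
    using proper[of "wD2 f"] proper by blast
  then have "wirreducible v p \<delta> e f k x y Gc gact
      \<longleftrightarrow> of_nat (e*f) * v \<delta> \<noteq> of_int (\<Sum>i\<in>{i. i < e*f \<and> x i = 0}. k i)"
    unfolding wirreducible_def by blast
  then show ?thesis using slope_D2 by auto
qed

lemma unique_proper_subobject:
  fixes v :: "'a::field \<Rightarrow> rat"
  assumes vm: "\<And>a b. a \<noteq> 0 \<Longrightarrow> b \<noteq> 0 \<Longrightarrow> v (a * b) = v a + v b"
    and d: "\<delta> \<noteq> 0" and pd: "of_nat p * \<delta> \<noteq> 0" and f: "0 < f"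
    and xy: "\<And>s. s < e*f \<Longrightarrow> (x s, y s) \<noteq> (0, 0)" and kn: "\<And>s. s < e*f \<Longrightarrow> k s \<ge> 0"
    and G_stable: "\<forall>g\<in>Gc. gact g ` wD2 f \<subseteq> wD2 f"
    and slope_D2: "of_nat (e*f) * v \<delta> = of_int (\<Sum>i\<in>{i. i < e*f \<and> x i = 0}. k i)"
  shows "wwa_sub v p \<delta> e f k x y Gc gact (wD2 f)
       \<and> (wD2 f :: ((nat \<Rightarrow> 'a) \<times> (nat \<Rightarrow> 'a)) set) \<noteq> wD f
       \<and> (\<forall>S. wwa_sub v p \<delta> e f k x y Gc gact S \<and> S \<noteq> wD f \<longrightarrow> S = wD2 f)"
proof -
  have "wwa_sub v p \<delta> e f k x y Gc gact S \<and> S \<noteq> wD f \<longleftrightarrow> S = wD2 f" for S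
    using proper_wa_subobject_iff[where e=e and k=k and x=x and y=y, OF vm d pd f xy kn G_stable]
      slope_D2 by simp
  then show ?thesis by blast
qed


theorem mainTheorem11:
  fixes p e f :: nat and v :: "'a::field_char_0 \<Rightarrow> rat" and \<delta> :: 'a
    and k :: "nat \<Rightarrow> int" and x y :: "nat \<Rightarrow> 'a"
    and G :: "('g, 'b) monoid_scheme" and nG :: "'g \<Rightarrow> nat" and prm :: "'g \<Rightarrow> nat \<Rightarrow> nat"
    and gact :: "'g \<Rightarrow> (nat \<Rightarrow> 'a) \<times> (nat \<Rightarrow> 'a) \<Rightarrow> (nat \<Rightarrow> 'a) \<times> (nat \<Rightarrow> 'a)"
  assumes p_prime: "prime p"
    and v_mult: "\<And>a b. a \<noteq> 0 \<Longrightarrow> b \<noteq> 0 \<Longrightarrow> v (a * b) = v a + v b"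
    and v_add: "\<And>a b. a \<noteq> 0 \<Longrightarrow> b \<noteq> 0 \<Longrightarrow> a + b \<noteq> 0 \<Longrightarrow> v (a + b) \<ge> min (v a) (v b)"
    and v_p: "v (of_nat p) = 1"
    and e_pos: "e > 0" and f_pos: "f > 0"
    and delta: "\<delta> \<noteq> 0"
    and x_vec: "x \<in> wvecs (e*f)" and y_vec: "y \<in> wvecs (e*f)"
    and xy_nz: "\<And>i. i < e*f \<Longrightarrow> (x i, y i) \<noteq> (0, 0)"
    and k_nonneg: "\<And>i. i < e*f \<Longrightarrow> k i \<ge> 0"
    and G_group: "group G" and G_fin: "finite (carrier G)"
    and nG_hom: "\<And>g h. g \<in> carrier G \<Longrightarrow> h \<in> carrier G \<Longrightarrow>
                   nG (g \<otimes>\<^bsub>G\<^esub> h) mod f = (nG g + nG h) mod f"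
    and pi_bij: "\<And>g. g \<in> carrier G \<Longrightarrow> bij_betw (prm g) {..<e*f} {..<e*f}"
    and pi_one: "\<And>i. i < e*f \<Longrightarrow> prm \<one>\<^bsub>G\<^esub> i = i"
    and pi_mult: "\<And>g h i. g \<in> carrier G \<Longrightarrow> h \<in> carrier G \<Longrightarrow> i < e*f \<Longrightarrow>
                   prm (g \<otimes>\<^bsub>G\<^esub> h) i = prm h (prm g i)"
    and pi_compat: "\<And>g i. g \<in> carrier G \<Longrightarrow> i < e*f \<Longrightarrow> prm g i mod f = (i + nG g) mod f"
    and gact_closed: "\<And>g u. g \<in> carrier G \<Longrightarrow> u \<in> wD f \<Longrightarrow> gact g u \<in> wD f"
    and gact_add: "\<And>g u w. g \<in> carrier G \<Longrightarrow> u \<in> wD f \<Longrightarrow> w \<in> wD f \<Longrightarrow>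
                   gact g (u + w) = gact g u + gact g w"
    and gact_semilin: "\<And>g a u. g \<in> carrier G \<Longrightarrow> a \<in> wvecs f \<Longrightarrow> u \<in> wD f \<Longrightarrow>
                   gact g (wsmult a u) = wsmult (wshift f (nG g) a) (gact g u)"
    and gact_one: "\<And>u. u \<in> wD f \<Longrightarrow> gact \<one>\<^bsub>G\<^esub> u = u"
    and gact_mult: "\<And>g h u. g \<in> carrier G \<Longrightarrow> h \<in> carrier G \<Longrightarrow> u \<in> wD f \<Longrightarrow>
                   gact (g \<otimes>\<^bsub>G\<^esub> h) u = gact g (gact h u)"
    and gact_phi: "\<And>g u. g \<in> carrier G \<Longrightarrow> u \<in> wD f \<Longrightarrow>
                   gact g (wphi p f \<delta> u) = wphi p f \<delta> (gact g u)"
    and gact_N: "\<And>g u. g \<in> carrier G \<Longrightarrow> u \<in> wD f \<Longrightarrow> gact g (wN u) = wN (gact g u)"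
    and gact_Fil: "\<And>g j. g \<in> carrier G \<Longrightarrow>
                   wgactL f (e*f) prm gact g ` wFil (e*f) k x y j \<subseteq> wFil (e*f) k x y j"
  shows "(\<exists>\<chi> :: 'g \<Rightarrow> 'a.
            (\<forall>g\<in>carrier G. \<chi> g \<noteq> 0)
          \<and> (\<forall>g\<in>carrier G. \<forall>h\<in>carrier G. \<chi> (g \<otimes>\<^bsub>G\<^esub> h) = \<chi> g * \<chi> h)
          \<and> (\<forall>g\<in>carrier G. gact g (wcst f 1, 0) = (wcst f (\<chi> g), 0)
                            \<and> gact g (0, wcst f 1) = (0, wcst f (\<chi> g))))
     \<and> (wweakly_admissible v p \<delta> e f k x y \<longleftrightarrow>
          (2 * of_nat (e*f) * v \<delta> + of_nat (e*f) = of_int (\<Sum>i<e*f. k i)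
           \<and> of_nat (e*f) * v \<delta> \<ge> of_int (\<Sum>i\<in>{i. i < e*f \<and> x i = 0}. k i)))
     \<and> (wweakly_admissible v p \<delta> e f k x y \<longrightarrow>
          (wirreducible v p \<delta> e f k x y (carrier G) gact \<longleftrightarrow>
             of_nat (e*f) * v \<delta> > of_int (\<Sum>i\<in>{i. i < e*f \<and> x i = 0}. k i)))
     \<and> (wweakly_admissible v p \<delta> e f k x y
          \<and> of_nat (e*f) * v \<delta> = of_int (\<Sum>i\<in>{i. i < e*f \<and> x i = 0}. k i) \<longrightarrow>
          (let D2 = {(0, b) | b. b \<in> wvecs f} in
             wwa_sub v p \<delta> e f k x y (carrier G) gact D2 \<and> D2 \<noteq> wD f
           \<and> (\<forall>S. wwa_sub v p \<delta> e f k x y (carrier G) gact S \<and> S \<noteq> wD f \<longrightarrow> S = D2)))"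
proof -
  have p0: "(of_nat p :: 'a) \<noteq> 0" using prime_gt_0_nat[OF p_prime] by simp
  then have pd: "of_nat p * \<delta> \<noteq> 0" using delta by simp
  have G_stable: "\<forall>g\<in>carrier G. gact g ` wD2 f \<subseteq> wD2 f"
    by (rule wD2_galois_stable[OF f_pos delta p_prime gact_closed gact_semilin gact_phi gact_N])
  have character: "\<exists>\<chi> :: 'g \<Rightarrow> 'a. (\<forall>g\<in>carrier G. \<chi> g \<noteq> 0)
      \<and> (\<forall>g\<in>carrier G. \<forall>h\<in>carrier G. \<chi> (g \<otimes>\<^bsub>G\<^esub> h) = \<chi> g * \<chi> h)
      \<and> (\<forall>g\<in>carrier G. gact g (eta1 f) = (wcst f (\<chi> g), 0) \<and> gact g (eta2 f) = (0, wcst f (\<chi> g)))"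
    by (rule galois_character[OF G_group f_pos delta p_prime gact_closed gact_semilin
          gact_one gact_mult gact_phi gact_N])
  have admissible: "wweakly_admissible v p \<delta> e f k x y \<longleftrightarrow>
      (2 * of_nat (e*f) * v \<delta> + of_nat (e*f) = of_int (\<Sum>i<e*f. k i)
       \<and> of_nat (e*f) * v \<delta> \<ge> of_int (\<Sum>i\<in>{i. i < e*f \<and> x i = 0}. k i))"
    by (rule weakly_admissible_iff[OF v_mult v_p p0 delta f_pos xy_nz k_nonneg])
  show ?thesis
  proof (intro conjI impI)
    show "wirreducible v p \<delta> e f k x y (carrier G) gact \<longleftrightarrow>
        of_nat (e*f) * v \<delta> > of_int (\<Sum>i\<in>{i. i < e*f \<and> x i = 0}. k i)"
      if "wweakly_admissible v p \<delta> e f k x y"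
      using that admissible
      by (intro irreducible_iff_strict[where e=e and k=k and x=x and y=y]
          v_mult delta pd f_pos xy_nz k_nonneg G_stable) auto
    show "let D2 = {(0, b) | b. b \<in> wvecs f} in
            wwa_sub v p \<delta> e f k x y (carrier G) gact D2 \<and> D2 \<noteq> wD f
          \<and> (\<forall>S. wwa_sub v p \<delta> e f k x y (carrier G) gact S \<and> S \<noteq> wD f \<longrightarrow> S = D2)"
      if "wweakly_admissible v p \<delta> e f k x y
          \<and> of_nat (e*f) * v \<delta> = of_int (\<Sum>i\<in>{i. i < e*f \<and> x i = 0}. k i)"
      unfolding Let_def wD2_def[symmetric] using that
      by (intro unique_proper_subobject[where e=e and k=k and x=x and y=y]
          v_mult delta pd f_pos xy_nz k_nonneg G_stable) auto
  qed (fact character admissible)+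
qed

end
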